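(* Let $\{M^A_\alpha\}_{\alpha=1}^{d_A^2}$ be a GSICPOVM on $\mathbb{C}^{d_A}$ with parameter $a_A$ and $\{M^B_\beta\}_{\beta=1}^{d_B^2}$ a GSICPOVM on $\mathbb{C}^{d_B}$ with parameter $a_B$. Let $\mu,\nu\in\mathbb{R}$ and $l$ a positive integer. If a state $\rho_{AB}$ on $\mathbb{C}^{d_A}\otimes\mathbb{C}^{d_B}$ is separable, then $$\left\|\mathcal{M}^l_{\mu,\nu}(\rho_{AB})\right\|_{\mathrm{tr}}\le\sqrt{\left(l\mu^2+\frac{a_Ad_A^2+1}{d_A(d_A+1)}\right)\left(l\nu^2+\frac{a_Bd_B^2+1}{d_B(d_B+1)}\right)},$$ where $$\mathcal{M}^l_{\mu,\nu}(\rho_{AB})=\begin{pmatrix}\mu\nu J_{l\times l}&\mu\,\omega_l(\zeta)^T\\ \nu\,\omega_l(\varsigma)&\mathcal{G}(\rho_{AB})\end{pmatrix}.$$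
   Context: A GSICPOVM (general symmetric informationally complete POVM) on $\mathbb{C}^d$ is a POVM of $d^2$ positive semidefinite operators $\{M_k\}_{k=1}^{d^2}$ summing to $I_d$ with $\mathrm{tr}(M_k)=1/d$, $\mathrm{tr}(M_k^2)=a$, $\mathrm{tr}(M_kM_l)=\frac{1-da}{d(d^2-1)}$ for $l\ne k$, where $\frac1{d^3}<a\le\frac1{d^2}$. A state is separable if it is a convex combination of product states $\rho_A^i\otimes\rho_B^i$. $\rho_A,\rho_B$ are the reduced states. $\varsigma\in\mathbb{R}^{d_A^2}$ has entries $\mathrm{tr}(M^A_\alpha\rho_A)$, $\zeta\in\mathbb{R}^{d_B^2}$ has entries $\mathrm{tr}(M^B_\beta\rho_B)$, and $\mathcal{G}(\rho_{AB})$ is the $d_A^2\times d_B^2$ matrix with entries $\mathrm{tr}[(M^A_\alpha\otimes M^B_\beta)\rho_{AB}]$ (row $\alpha$, column $\beta$). $J_{l\times l}$ is the $l\times l$ all-ones matrix; for a column vector $X$, $\omega_l(X)=(X,\dots,X)$ is the matrix with $l$ columns equal to $X$. $\|G\|_{\mathrm{tr}}=\mathrm{tr}\sqrt{G^\dagger G}$. *)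

theory Defs
  imports "Jordan_Normal_Form.Schur_Decomposition"
begin

definition mtrace :: "complex mat \<Rightarrow> complex" where
  "mtrace A = (\<Sum>i<dim_row A. A $$ (i, i))"

definition is_psd :: "nat \<Rightarrow> complex mat \<Rightarrow> bool" where
  "is_psd n A \<longleftrightarrow> A \<in> carrier_mat n n \<and> mat_adjoint A = A \<and>
     (\<forall>v \<in> carrier_vec n. 0 \<le> Re (conjugate v \<bullet> (A *\<^sub>v v)))"

definition is_density :: "nat \<Rightarrow> complex mat \<Rightarrow> bool" where
  "is_density n \<rho> \<longleftrightarrow> is_psd n \<rho> \<and> mtrace \<rho> = 1"

definition is_GSICPOVM :: "nat \<Rightarrow> real \<Rightarrow> (nat \<Rightarrow> complex mat) \<Rightarrow> bool" where
  "is_GSICPOVM d a M \<longleftrightarrow>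
     1 / real d ^ 3 < a \<and> a \<le> 1 / real d ^ 2 \<and>
     (\<forall>k < d^2. is_psd d (M k)) \<and>
     (\<forall>i < d. \<forall>j < d. (\<Sum>k < d^2. M k $$ (i, j)) = (1\<^sub>m d) $$ (i, j)) \<and>
     (\<forall>k < d^2. mtrace (M k) = complex_of_real (1 / real d)) \<and>
     (\<forall>k < d^2. mtrace (M k * M k) = complex_of_real a) \<and>
     (\<forall>k < d^2. \<forall>l < d^2. k \<noteq> l \<longrightarrow>
        mtrace (M k * M l) = complex_of_real ((1 - real d * a) / (real d * (real d ^ 2 - 1))))"

(* Kronecker (tensor) product; basis index of e_i \<otimes> e_j is i * dim + j *)
definition kron :: "complex mat \<Rightarrow> complex mat \<Rightarrow> complex mat" where
  "kron A B = mat (dim_row A * dim_row B) (dim_col A * dim_col B)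
     (\<lambda>(r, c). A $$ (r div dim_row B, c div dim_col B) * B $$ (r mod dim_row B, c mod dim_col B))"

definition separable :: "nat \<Rightarrow> nat \<Rightarrow> complex mat \<Rightarrow> bool" where
  "separable dA dB \<rho> \<longleftrightarrow>
     (\<exists>(n::nat) (p :: nat \<Rightarrow> real) \<rho>A \<rho>B.
        (\<forall>i<n. 0 \<le> p i) \<and> (\<Sum>i<n. p i) = 1 \<and>
        (\<forall>i<n. is_density dA (\<rho>A i) \<and> is_density dB (\<rho>B i)) \<and>
        \<rho> = mat (dA * dB) (dA * dB)
              (\<lambda>(r, c). \<Sum>i<n. complex_of_real (p i) * kron (\<rho>A i) (\<rho>B i) $$ (r, c)))"

definition ptrace_B :: "nat \<Rightarrow> nat \<Rightarrow> complex mat \<Rightarrow> complex mat" where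
  "ptrace_B dA dB \<rho> = mat dA dA (\<lambda>(i, j). \<Sum>k<dB. \<rho> $$ (i * dB + k, j * dB + k))"

definition ptrace_A :: "nat \<Rightarrow> nat \<Rightarrow> complex mat \<Rightarrow> complex mat" where
  "ptrace_A dA dB \<rho> = mat dB dB (\<lambda>(i, j). \<Sum>k<dA. \<rho> $$ (k * dB + i, k * dB + j))"

definition varsigma :: "nat \<Rightarrow> nat \<Rightarrow> (nat \<Rightarrow> complex mat) \<Rightarrow> complex mat \<Rightarrow> complex vec" where
  "varsigma dA dB MA \<rho> = vec (dA^2) (\<lambda>\<alpha>. mtrace (MA \<alpha> * ptrace_B dA dB \<rho>))"

definition zeta :: "nat \<Rightarrow> nat \<Rightarrow> (nat \<Rightarrow> complex mat) \<Rightarrow> complex mat \<Rightarrow> complex vec" where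
  "zeta dA dB MB \<rho> = vec (dB^2) (\<lambda>\<beta>. mtrace (MB \<beta> * ptrace_A dA dB \<rho>))"

definition corrG :: "nat \<Rightarrow> nat \<Rightarrow> (nat \<Rightarrow> complex mat) \<Rightarrow> (nat \<Rightarrow> complex mat) \<Rightarrow> complex mat \<Rightarrow> complex mat" where
  "corrG dA dB MA MB \<rho> = mat (dA^2) (dB^2) (\<lambda>(\<alpha>, \<beta>). mtrace (kron (MA \<alpha>) (MB \<beta>) * \<rho>))"

definition Jmat :: "nat \<Rightarrow> complex mat" where
  "Jmat l = mat l l (\<lambda>_. 1)"

definition omega :: "nat \<Rightarrow> complex vec \<Rightarrow> complex mat" where
  "omega l X = mat (dim_vec X) l (\<lambda>(i, j). X $ i)"

definition Mmat :: "nat \<Rightarrow> real \<Rightarrow> real \<Rightarrow> nat \<Rightarrow> nat \<Rightarrow> (nat \<Rightarrow> complex mat) \<Rightarrow> (nat \<Rightarrow> complex mat) \<Rightarrow> complex mat \<Rightarrow> complex mat" where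
  "Mmat l \<mu> \<nu> dA dB MA MB \<rho> =
     four_block_mat (complex_of_real (\<mu> * \<nu>) \<cdot>\<^sub>m Jmat l)
                    (complex_of_real \<mu> \<cdot>\<^sub>m transpose_mat (omega l (zeta dA dB MB \<rho>)))
                    (complex_of_real \<nu> \<cdot>\<^sub>m omega l (varsigma dA dB MA \<rho>))
                    (corrG dA dB MA MB \<rho>)"

definition psd_sqrt :: "complex mat \<Rightarrow> complex mat" where
  "psd_sqrt P = (THE S. is_psd (dim_row P) S \<and> S * S = P)"

definition trace_norm :: "complex mat \<Rightarrow> real" where
  "trace_norm G = Re (mtrace (psd_sqrt (mat_adjoint G * G)))"

end

theory Submission
  imports Defs "Jordan_Normal_Form.Spectral_Radius" "HOL-Analysis.L2_Norm"
begin

(* For a product state \<rho>A \<otimes> \<rho>B the matrix M^l_{\<mu>,\<nu>} is the rank-one matrix u w^T, where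
   u = (\<mu>, ..., \<mu>, tr(M^A_\<alpha> \<rho>A)) and w = (\<nu>, ..., \<nu>, tr(M^B_\<beta> \<rho>B)); for a separable state it is a
   convex combination of such matrices.  The trace norm of X = \<Sum>i p_i u_i w_i^T is at most
   \<Sum>i p_i |u_i| |w_i|: writing the singular values as d_k = <q_k, X v_k> for orthonormal v_k and q_k,
   this follows from Cauchy-Schwarz and Bessel's inequality.  Finally |u|^2 = l \<mu>^2 + \<Sum>\<alpha> tr(M_\<alpha> \<rho>)^2,
   and the last sum is at most (a d^2 + 1) / (d (d + 1)): a GSICPOVM has the Gram matrix
   tr(M_\<alpha> M_\<beta>) = b + (a - b) \<delta>_{\<alpha>\<beta>} with b = (1 - d a) / (d (d^2 - 1)), so expanding
   \<parallel>\<rho> - \<Sum>\<alpha> \<gamma>_\<alpha> M_\<alpha>\<parallel>^2 \<ge> 0 for a suitable \<gamma> and using tr \<rho>^2 \<le> 1 gives the bound. *)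

section \<open>Adjoints, traces and unitary matrices\<close>

lemma dim_mat_adjoint [simp]:
  "dim_row (mat_adjoint A) = dim_col A" "dim_col (mat_adjoint A) = dim_row A"
  unfolding mat_adjoint_def by (simp_all add: mat_of_rows_def)

lemma index_mat_adjoint [simp]:
  fixes A :: "complex mat"
  shows "i < dim_col A \<Longrightarrow> j < dim_row A \<Longrightarrow> mat_adjoint A $$ (i, j) = cnj (A $$ (j, i))"
  unfolding mat_adjoint_def mat_of_rows_def by simp

lemma mat_adjoint_carrier [simp]: "A \<in> carrier_mat n m \<Longrightarrow> mat_adjoint A \<in> carrier_mat m n"
  unfolding carrier_mat_def by simp

lemma mat_adjoint_mat_adjoint [simp]:
  fixes A :: "complex mat"
  shows "mat_adjoint (mat_adjoint A) = A"
  by (rule eq_matI) auto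

lemma index_mult_mat_carrier:
  "A \<in> carrier_mat nr n \<Longrightarrow> B \<in> carrier_mat n nc \<Longrightarrow> i < nr \<Longrightarrow> j < nc \<Longrightarrow>
    (A * B) $$ (i, j) = (\<Sum>k<n. A $$ (i, k) * B $$ (k, j))"
  by (simp add: scalar_prod_def atLeast0LessThan)

lemma mat_adjoint_mult:
  fixes A B :: "complex mat"
  assumes "A \<in> carrier_mat n m" "B \<in> carrier_mat m k"
  shows "mat_adjoint (A * B) = mat_adjoint B * mat_adjoint A"
proof (rule eq_matI)
  fix i j assume "i < dim_row (mat_adjoint B * mat_adjoint A)" "j < dim_col (mat_adjoint B * mat_adjoint A)"
  hence i: "i < k" and j: "j < n" using assms by auto
  have "mat_adjoint (A * B) $$ (i, j) = (\<Sum>l<m. cnj (A $$ (j, l)) * cnj (B $$ (l, i)))"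
    using assms i j by (simp add: index_mult_mat_carrier[OF assms j i] cnj_sum)
  also have "\<dots> = (mat_adjoint B * mat_adjoint A) $$ (i, j)"
    using assms i j
    by (subst index_mult_mat_carrier[of _ k m _ n]) (auto intro!: sum.cong simp del: complex_cnj_mult)
  finally show "mat_adjoint (A * B) $$ (i, j) = (mat_adjoint B * mat_adjoint A) $$ (i, j)" .
qed (use assms in auto)

lemma hermitian_index:
  fixes A :: "complex mat"
  assumes "A \<in> carrier_mat n n" "mat_adjoint A = A" "i < n" "j < n"
  shows "A $$ (j, i) = cnj (A $$ (i, j))"
  by (metis assms index_mat_adjoint carrier_matD)

lemma quadratic_form_sum:
  assumes "S \<in> carrier_mat n n" "v \<in> carrier_vec n"
  shows "conjugate v \<bullet> (S *\<^sub>v v) = (\<Sum>i<n. cnj (v $ i) * (\<Sum>j<n. S $$ (i, j) * v $ j))"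
  using assms by (simp add: scalar_prod_def atLeast0LessThan)

lemma sum_swap3:
  "(\<Sum>i\<in>A. \<Sum>j\<in>B. \<Sum>k\<in>C. f i j k) = (\<Sum>k\<in>C. \<Sum>i\<in>A. \<Sum>j\<in>B. f i j k)"
  by (simp add: sum.swap[of _ C])

lemma mtrace_carrier: "A \<in> carrier_mat n n \<Longrightarrow> mtrace A = (\<Sum>i<n. A $$ (i, i))"
  unfolding mtrace_def by simp

lemma mtrace_mult_sum:
  assumes "A \<in> carrier_mat n m" "B \<in> carrier_mat m n"
  shows "mtrace (A * B) = (\<Sum>i<n. \<Sum>j<m. A $$ (i, j) * B $$ (j, i))"
  unfolding mtrace_carrier[OF mult_carrier_mat[OF assms]]
  by (rule sum.cong[OF refl], rule index_mult_mat_carrier[OF assms]) auto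

lemma mtrace_mult_comm:
  assumes "A \<in> carrier_mat n m" "B \<in> carrier_mat m n"
  shows "mtrace (A * B) = mtrace (B * A)"
  unfolding mtrace_mult_sum[OF assms] mtrace_mult_sum[OF assms(2,1)]
  by (subst sum.swap) (simp add: mult.commute)

lemma hilbert_schmidt_eq_mtrace:
  fixes A B :: "complex mat"
  assumes A: "A \<in> carrier_mat n n" and AH: "mat_adjoint A = A" and B: "B \<in> carrier_mat n n"
  shows "(\<Sum>t\<in>{..<n} \<times> {..<n}. cnj (A $$ t) * B $$ t) = mtrace (A * B)"
proof -
  have "(\<Sum>t\<in>{..<n} \<times> {..<n}. cnj (A $$ t) * B $$ t) = (\<Sum>i<n. \<Sum>j<n. cnj (A $$ (i, j)) * B $$ (i, j))"
    by (simp add: sum.cartesian_product)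
  also have "\<dots> = (\<Sum>i<n. \<Sum>j<n. A $$ (j, i) * B $$ (i, j))"
    by (intro sum.cong refl) (simp add: hermitian_index[OF A AH, symmetric])
  also have "\<dots> = mtrace (A * B)"
    unfolding mtrace_mult_sum[OF A B] by (rule sum.swap)
  finally show ?thesis .
qed

definition unitary :: "nat \<Rightarrow> complex mat \<Rightarrow> bool" where
  "unitary n U \<longleftrightarrow> U \<in> carrier_mat n n \<and> mat_adjoint U * U = 1\<^sub>m n \<and> U * mat_adjoint U = 1\<^sub>m n"

lemma unitaryI:
  assumes "U \<in> carrier_mat n n" "mat_adjoint U * U = 1\<^sub>m n"
  shows "unitary n U"
  using mat_mult_left_right_inverse[of "mat_adjoint U" n U] assms unfolding unitary_def by auto

lemma unitary_carrier [simp]: "unitary n U \<Longrightarrow> U \<in> carrier_mat n n"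
  unfolding unitary_def by auto

lemma unitary_adjoint_cancel_left:
  assumes "unitary n U" "X \<in> carrier_mat n k"
  shows "mat_adjoint U * (U * X) = X"
proof -
  have "mat_adjoint U * (U * X) = (mat_adjoint U * U) * X"
    using assms by (subst assoc_mult_mat[of _ n n _ n _ k]) auto
  thus ?thesis using assms unfolding unitary_def by auto
qed

lemma unitary_adjoint_cancel_right:
  assumes "unitary n U" "X \<in> carrier_mat n k"
  shows "U * (mat_adjoint U * X) = X"
proof -
  have "U * (mat_adjoint U * X) = (U * mat_adjoint U) * X"
    using assms by (subst assoc_mult_mat[of _ n n _ n _ k]) auto
  thus ?thesis using assms unfolding unitary_def by auto
qed

lemma unitary_mult:
  assumes U: "unitary n U" and V: "unitary n V"
  shows "unitary n (U * V)"
proof (rule unitaryI)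
  have c: "U \<in> carrier_mat n n" "V \<in> carrier_mat n n" using assms by auto
  have "mat_adjoint (U * V) * (U * V) = mat_adjoint V * (mat_adjoint U * (U * V))"
    using c by (simp add: mat_adjoint_mult[of _ n n _ n] assoc_mult_mat[OF mat_adjoint_carrier[OF c(2)]
        mat_adjoint_carrier[OF c(1)] mult_carrier_mat[OF c]])
  also have "\<dots> = 1\<^sub>m n"
    using c V unfolding unitary_adjoint_cancel_left[OF U c(2)] unitary_def by simp
  finally show "mat_adjoint (U * V) * (U * V) = 1\<^sub>m n" .
qed (use unitary_carrier[OF U] unitary_carrier[OF V] in auto)

lemma unitary_col_orthonormal:
  assumes U: "unitary n U" and j: "j < n" and k: "k < n"
  shows "(\<Sum>c<n. cnj (U $$ (c, j)) * U $$ (c, k)) = (if j = k then 1 else 0)"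
proof -
  have "(\<Sum>c<n. cnj (U $$ (c, j)) * U $$ (c, k)) = (mat_adjoint U * U) $$ (j, k)"
    using unitary_carrier[OF U] j k
    by (subst index_mult_mat_carrier[of _ n n _ n]) (auto intro!: sum.cong)
  thus ?thesis using U j k unfolding unitary_def by auto
qed

section \<open>The spectral theorem for Hermitian matrices\<close>

definition real_diag_mat :: "nat \<Rightarrow> (nat \<Rightarrow> real) \<Rightarrow> complex mat" where
  "real_diag_mat n d = mat n n (\<lambda>(i, j). if i = j then complex_of_real (d i) else 0)"

lemma real_diag_mat_carrier [simp]: "real_diag_mat n d \<in> carrier_mat n n"
  by (simp add: real_diag_mat_def)

lemma dim_real_diag_mat [simp]: "dim_row (real_diag_mat n d) = n" "dim_col (real_diag_mat n d) = n"
  by (simp_all add: real_diag_mat_def)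

lemma mat_adjoint_real_diag_mat [simp]: "mat_adjoint (real_diag_mat n d) = real_diag_mat n d"
  by (rule eq_matI) (auto simp: real_diag_mat_def)

lemma real_diag_mat_cong: "(\<And>k. k < n \<Longrightarrow> f k = g k) \<Longrightarrow> real_diag_mat n f = real_diag_mat n g"
  by (rule eq_matI) (auto simp: real_diag_mat_def)

lemma index_mult_real_diag_mat:
  assumes "X \<in> carrier_mat m n" "i < m" "j < n"
  shows "(X * real_diag_mat n d) $$ (i, j) = X $$ (i, j) * of_real (d j)"
proof -
  have "(X * real_diag_mat n d) $$ (i, j) = (\<Sum>k<n. X $$ (i, k) * (if k = j then of_real (d k) else 0))"
    using assms by (subst index_mult_mat_carrier[of _ m n _ n]) (auto simp: real_diag_mat_def)
  also have "\<dots> = (\<Sum>k<n. if k = j then X $$ (i, k) * of_real (d j) else 0)"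
    by (rule sum.cong) auto
  also have "\<dots> = X $$ (i, j) * of_real (d j)" using assms by (simp add: sum.delta)
  finally show ?thesis .
qed

lemma index_real_diag_mat_mult:
  assumes "X \<in> carrier_mat n m" "i < n" "j < m"
  shows "(real_diag_mat n d * X) $$ (i, j) = of_real (d i) * X $$ (i, j)"
proof -
  have "(real_diag_mat n d * X) $$ (i, j) = (\<Sum>k<n. (if i = k then of_real (d i) else 0) * X $$ (k, j))"
    using assms by (subst index_mult_mat_carrier[of _ n n _ m]) (auto simp: real_diag_mat_def)
  also have "\<dots> = (\<Sum>k<n. if k = i then of_real (d i) * X $$ (i, j) else 0)"
    by (rule sum.cong) auto
  also have "\<dots> = of_real (d i) * X $$ (i, j)" using assms by (simp add: sum.delta)
  finally show ?thesis .
qed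

lemma real_diag_mat_mult: "real_diag_mat n f * real_diag_mat n g = real_diag_mat n (\<lambda>k. f k * g k)"
proof (rule eq_matI)
  fix i j assume "i < dim_row (real_diag_mat n (\<lambda>k. f k * g k))" "j < dim_col (real_diag_mat n (\<lambda>k. f k * g k))"
  thus "(real_diag_mat n f * real_diag_mat n g) $$ (i, j) = real_diag_mat n (\<lambda>k. f k * g k) $$ (i, j)"
    using index_mult_real_diag_mat[of "real_diag_mat n f" n n i j g] by (auto simp: real_diag_mat_def)
qed auto

lemma index_unitary_conj_real_diag:
  assumes "U \<in> carrier_mat n n" "i < n" "j < n"
  shows "(U * real_diag_mat n d * mat_adjoint U) $$ (i, j)
    = (\<Sum>k<n. U $$ (i, k) * of_real (d k) * cnj (U $$ (j, k)))"
  using assms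
  by (subst index_mult_mat_carrier[of _ n n _ n]) (auto simp: index_mult_real_diag_mat simp del: index_mult_mat)

lemma unitary_of_corthogonal_cols:
  assumes ws: "corthogonal ws" "set ws \<subseteq> carrier_vec n" "length ws = n"
  defines "nr k \<equiv> sqrt (\<Sum>i<n. (cmod (ws ! k $ i))\<^sup>2)"
  shows "unitary n (mat n n (\<lambda>(i, k). ws ! k $ i / complex_of_real (nr k)))"
    and "\<And>k. k < n \<Longrightarrow> nr k > 0"
proof -
  let ?W = "mat n n (\<lambda>(i, k). ws ! k $ i / complex_of_real (nr k))"
  have wsc: "k < n \<Longrightarrow> ws ! k \<in> carrier_vec n" for k using ws by auto
  have sprod: "ws ! k \<bullet>c ws ! j = (\<Sum>i<n. ws ! k $ i * cnj (ws ! j $ i))" if "k < n" "j < n" for k j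
    using wsc[OF that(1)] wsc[OF that(2)] by (simp add: scalar_prod_def atLeast0LessThan)
  have nr_sq: "complex_of_real ((nr k)\<^sup>2) = (\<Sum>i<n. ws ! k $ i * cnj (ws ! k $ i))" for k
  proof -
    have "(nr k)\<^sup>2 = (\<Sum>i<n. (cmod (ws ! k $ i))\<^sup>2)" unfolding nr_def by (simp add: sum_nonneg)
    thus ?thesis by (simp only: of_real_sum complex_norm_square)
  qed
  show nr_pos: "nr k > 0" if k: "k < n" for k
  proof -
    have "ws ! k \<bullet>c ws ! k \<noteq> 0" using corthogonalD[OF ws(1), of k k] ws(3) k by auto
    hence "(nr k)\<^sup>2 \<noteq> 0" using sprod[OF k k] nr_sq[of k] by auto
    moreover have "nr k \<ge> 0" unfolding nr_def by (simp add: sum_nonneg)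
    ultimately show ?thesis by auto
  qed
  have "mat_adjoint ?W * ?W = 1\<^sub>m n"
  proof (rule eq_matI)
    fix i j assume "i < dim_row (1\<^sub>m n)" "j < dim_col (1\<^sub>m n)"
    hence i: "i < n" and j: "j < n" by auto
    have "(mat_adjoint ?W * ?W) $$ (i, j)
        = (\<Sum>k<n. ws ! j $ k * cnj (ws ! i $ k)) / (complex_of_real (nr i) * complex_of_real (nr j))"
      using i j by (subst index_mult_mat_carrier[of _ n n _ n])
        (auto simp: sum_divide_distrib mult.commute)
    also have "\<dots> = 1\<^sub>m n $$ (i, j)"
    proof (cases "i = j")
      case True
      thus ?thesis using nr_sq[of i, symmetric] nr_pos[OF i] i by (simp add: power2_eq_square)
    next
      case False
      have "ws ! j \<bullet>c ws ! i = 0" using corthogonalD[OF ws(1), of j i] ws(3) i j False by auto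
      thus ?thesis using sprod[OF j i] False i j by simp
    qed
    finally show "(mat_adjoint ?W * ?W) $$ (i, j) = 1\<^sub>m n $$ (i, j)" .
  qed auto
  thus "unitary n ?W" by (intro unitaryI) auto
qed

lemma unitary_with_eigenvector_col0:
  fixes A :: "complex mat"
  assumes A: "A \<in> carrier_mat n n" and n: "0 < n"
  shows "\<exists>W e. unitary n W \<and> (\<forall>i<n. (A * W) $$ (i, 0) = e * W $$ (i, 0))"
proof -
  from spectrum_non_empty[OF A n] obtain e where "eigenvalue A e" unfolding spectrum_def by auto
  then obtain v where v: "v \<in> carrier_vec n" and v0: "v \<noteq> 0\<^sub>v n" and Av: "A *\<^sub>v v = e \<cdot>\<^sub>v v"
    unfolding eigenvalue_def eigenvector_def using A by auto
  interpret cof_vec_space n "TYPE(complex)" .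
  define b where "b = basis_completion v"
  note bc = basis_completion[OF v v0, folded b_def]
  from bc(6,7) n obtain vs where bv: "b = v # vs" by (cases b) auto
  define ws where "ws = gram_schmidt n b"
  from gram_schmidt_result[OF bc(2) bc(4) bc(5) ws_def]
  have ws: "corthogonal ws" "set ws \<subseteq> carrier_vec n" "length ws = n" using bc(6) by auto
  have "hd ws = v" unfolding ws_def bv using gram_schmidt_hd[OF v] by simp
  hence ws0: "ws ! 0 = v" using ws(3) n by (cases ws) auto
  define nr0 where "nr0 = sqrt (\<Sum>i<n. (cmod (ws ! 0 $ i))\<^sup>2)"
  define W where "W = mat n n (\<lambda>(i, k). ws ! k $ i / complex_of_real (sqrt (\<Sum>i<n. (cmod (ws ! k $ i))\<^sup>2)))"
  have W: "unitary n W" unfolding W_def by (rule unitary_of_corthogonal_cols[OF ws])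
  have "(A * W) $$ (i, 0) = e * W $$ (i, 0)" if i: "i < n" for i
  proof -
    have "(A * W) $$ (i, 0) = (\<Sum>j<n. A $$ (i, j) * v $ j) / complex_of_real nr0"
      using A i n by (subst index_mult_mat_carrier[of _ n n _ n])
        (auto simp: W_def nr0_def ws0 sum_divide_distrib)
    also have "(\<Sum>j<n. A $$ (i, j) * v $ j) = (A *\<^sub>v v) $ i"
      using A v i by (simp add: scalar_prod_def atLeast0LessThan)
    finally show ?thesis using Av v i n by (simp add: W_def nr0_def ws0)
  qed
  with W show ?thesis by blast
qed

definition unitary_extend :: "nat \<Rightarrow> complex mat \<Rightarrow> complex mat" where
  "unitary_extend m U = mat (Suc m) (Suc m) (\<lambda>(i, j).
     if i = 0 then (if j = 0 then 1 else 0) else if j = 0 then 0 else U $$ (i - 1, j - 1))"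

lemma unitary_unitary_extend:
  assumes U: "unitary m U"
  shows "unitary (Suc m) (unitary_extend m U)"
proof (rule unitaryI)
  let ?E = "unitary_extend m U"
  have Uc: "U \<in> carrier_mat m m" using U by auto
  show Ec: "?E \<in> carrier_mat (Suc m) (Suc m)" unfolding unitary_extend_def by simp
  show "mat_adjoint ?E * ?E = 1\<^sub>m (Suc m)"
  proof (rule eq_matI)
    fix i j assume "i < dim_row (1\<^sub>m (Suc m))" "j < dim_col (1\<^sub>m (Suc m))"
    hence i: "i < Suc m" and j: "j < Suc m" by auto
    have "(mat_adjoint ?E * ?E) $$ (i, j) = (\<Sum>k<Suc m. cnj (?E $$ (k, i)) * ?E $$ (k, j))"
      using Ec i j by (subst index_mult_mat_carrier[of _ "Suc m" "Suc m" _ "Suc m"]) auto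
    also have "\<dots> = cnj (?E $$ (0, i)) * ?E $$ (0, j) + (\<Sum>k<m. cnj (?E $$ (Suc k, i)) * ?E $$ (Suc k, j))"
      by (rule sum.lessThan_Suc_shift)
    also have "\<dots> = 1\<^sub>m (Suc m) $$ (i, j)"
    proof (cases "i = 0 \<or> j = 0")
      case True
      thus ?thesis using i j by (auto simp: unitary_extend_def)
    next
      case False
      then obtain i' j' where ij: "i = Suc i'" "j = Suc j'" by (meson not0_implies_Suc)
      have "(\<Sum>k<m. cnj (?E $$ (Suc k, i)) * ?E $$ (Suc k, j)) = (\<Sum>k<m. cnj (U $$ (k, i')) * U $$ (k, j'))"
        using i j ij by (auto simp: unitary_extend_def intro!: sum.cong)
      also have "\<dots> = (if i' = j' then 1 else 0)" using unitary_col_orthonormal[OF U] i j ij by simp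
      finally show ?thesis using i j ij by (auto simp: unitary_extend_def)
    qed
    finally show "(mat_adjoint ?E * ?E) $$ (i, j) = 1\<^sub>m (Suc m) $$ (i, j)" .
  qed (use Ec in auto)
qed

lemma unitary_conj_eigenvector_col0:
  fixes A :: "complex mat"
  assumes A: "A \<in> carrier_mat n n" and AH: "mat_adjoint A = A" and W: "unitary n W"
    and eig: "\<And>i. i < n \<Longrightarrow> (A * W) $$ (i, 0) = e * W $$ (i, 0)"
  shows "mat_adjoint (mat_adjoint W * (A * W)) = mat_adjoint W * (A * W)"
    and "\<And>i. i < n \<Longrightarrow> (mat_adjoint W * (A * W)) $$ (i, 0) = (if i = 0 then e else 0)"
proof -
  have Wc: "W \<in> carrier_mat n n" using W by auto
  show "mat_adjoint (mat_adjoint W * (A * W)) = mat_adjoint W * (A * W)"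
    using Wc A AH by (simp add: mat_adjoint_mult[of _ n n _ n] assoc_mult_mat[of _ n n _ n _ n])
  fix i assume i: "i < n"
  have "(mat_adjoint W * (A * W)) $$ (i, 0) = (\<Sum>k<n. cnj (W $$ (k, i)) * (A * W) $$ (k, 0))"
    using Wc A i by (subst index_mult_mat_carrier[of _ n n _ n]) auto
  also have "\<dots> = e * (\<Sum>k<n. cnj (W $$ (k, i)) * W $$ (k, 0))"
    unfolding sum_distrib_left by (rule sum.cong) (auto simp: eig)
  also have "\<dots> = (if i = 0 then e else 0)"
    using unitary_col_orthonormal[OF W i, of 0] i by auto
  finally show "(mat_adjoint W * (A * W)) $$ (i, 0) = (if i = 0 then e else 0)" .
qed

lemma hermitian_block_diagonalization:
  fixes A :: "complex mat"
  assumes A: "A \<in> carrier_mat (Suc m) (Suc m)" and AH: "mat_adjoint A = A"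
    and col0: "\<And>i. i < Suc m \<Longrightarrow> A $$ (i, 0) = (if i = 0 then e else 0)"
    and U: "unitary m U"
    and corner: "mat m m (\<lambda>(i, j). A $$ (Suc i, Suc j)) = U * real_diag_mat m d * mat_adjoint U"
  shows "A = unitary_extend m U * real_diag_mat (Suc m) (\<lambda>k. if k = 0 then Re e else d (k - 1))
    * mat_adjoint (unitary_extend m U)"
proof -
  let ?E = "unitary_extend m U" and ?d = "\<lambda>k. if k = 0 then Re e else d (k - 1)"
  have Uc: "U \<in> carrier_mat m m" using U by auto
  have Ec: "?E \<in> carrier_mat (Suc m) (Suc m)" unfolding unitary_extend_def by simp
  have herm: "A $$ (i, j) = cnj (A $$ (j, i))" if "i < Suc m" "j < Suc m" for i j
    using hermitian_index[OF A AH that(2,1)] .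
  have row0: "A $$ (0, j) = (if j = 0 then e else 0)" if j: "j < Suc m" for j
    using herm[of 0 j] col0[OF j] j col0[of 0] herm[of 0 0] by (cases "j = 0") auto
  have e_real: "e = complex_of_real (Re e)"
    using herm[of 0 0] col0[of 0] by (metis Reals_cnj_iff complex_is_Real_iff of_real_Re zero_less_Suc)
  show ?thesis
  proof (rule eq_matI)
    fix i j assume "i < dim_row (?E * real_diag_mat (Suc m) ?d * mat_adjoint ?E)"
      "j < dim_col (?E * real_diag_mat (Suc m) ?d * mat_adjoint ?E)"
    hence i: "i < Suc m" and j: "j < Suc m" using Ec by auto
    have "(?E * real_diag_mat (Suc m) ?d * mat_adjoint ?E) $$ (i, j)
        = (\<Sum>k<Suc m. ?E $$ (i, k) * of_real (?d k) * cnj (?E $$ (j, k)))"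
      by (rule index_unitary_conj_real_diag[OF Ec i j])
    also have "\<dots> = ?E $$ (i, 0) * of_real (?d 0) * cnj (?E $$ (j, 0))
        + (\<Sum>k<m. ?E $$ (i, Suc k) * of_real (?d (Suc k)) * cnj (?E $$ (j, Suc k)))"
      by (rule sum.lessThan_Suc_shift)
    also have "\<dots> = A $$ (i, j)"
    proof (cases "i = 0 \<or> j = 0")
      case True
      thus ?thesis using i j row0 col0 e_real by (auto simp: unitary_extend_def)
    next
      case False
      then obtain i' j' where ij: "i = Suc i'" "j = Suc j'" by (meson not0_implies_Suc)
      have "(\<Sum>k<m. ?E $$ (i, Suc k) * of_real (?d (Suc k)) * cnj (?E $$ (j, Suc k)))
          = (\<Sum>k<m. U $$ (i', k) * of_real (d k) * cnj (U $$ (j', k)))"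
        using i j ij by (auto simp: unitary_extend_def intro!: sum.cong)
      also have "\<dots> = (U * real_diag_mat m d * mat_adjoint U) $$ (i', j')"
        using i j ij index_unitary_conj_real_diag[OF Uc, of i' j' d] by simp
      also have "\<dots> = A $$ (i, j)" unfolding corner[symmetric] using i j ij by simp
      finally show ?thesis using i j ij by (auto simp: unitary_extend_def)
    qed
    finally show "A $$ (i, j) = (?E * real_diag_mat (Suc m) ?d * mat_adjoint ?E) $$ (i, j)" by simp
  qed (use A Ec in auto)
qed

theorem hermitian_unitary_diagonalization:
  fixes A :: "complex mat"
  assumes "A \<in> carrier_mat n n" "mat_adjoint A = A"
  shows "\<exists>U d. unitary n U \<and> A = U * real_diag_mat n d * mat_adjoint U"
  using assms
proof (induction n arbitrary: A)
  case 0
  have "unitary 0 (1\<^sub>m 0)" by (rule unitaryI) (auto intro!: eq_matI)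
  moreover have "A = 1\<^sub>m 0 * real_diag_mat 0 (\<lambda>_. 0) * mat_adjoint (1\<^sub>m 0)"
    using 0 by (intro eq_matI) auto
  ultimately show ?case by blast
next
  case (Suc m A)
  let ?n = "Suc m"
  have A: "A \<in> carrier_mat ?n ?n" and AH: "mat_adjoint A = A" using Suc.prems by auto
  obtain W e where W: "unitary ?n W" and eig: "\<And>i. i < ?n \<Longrightarrow> (A * W) $$ (i, 0) = e * W $$ (i, 0)"
    using unitary_with_eigenvector_col0[OF A] by auto
  have Wc: "W \<in> carrier_mat ?n ?n" using W by auto
  define A' where "A' = mat_adjoint W * (A * W)"
  have A'c: "A' \<in> carrier_mat ?n ?n" unfolding A'_def using Wc A by auto
  have A'H: "mat_adjoint A' = A'" and col0: "\<And>i. i < ?n \<Longrightarrow> A' $$ (i, 0) = (if i = 0 then e else 0)"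
    unfolding A'_def using unitary_conj_eigenvector_col0[OF A AH W eig] by auto
  define A3 where "A3 = mat m m (\<lambda>(i, j). A' $$ (Suc i, Suc j))"
  have A3H: "mat_adjoint A3 = A3"
    by (rule eq_matI) (auto simp: A3_def hermitian_index[OF A'c A'H, symmetric])
  obtain U3 d3 where U3: "unitary m U3" and A3eq: "A3 = U3 * real_diag_mat m d3 * mat_adjoint U3"
    using Suc.IH[of A3] A3H unfolding A3_def by auto
  define E where "E = unitary_extend m U3"
  define d where "d k = (if k = 0 then Re e else d3 (k - 1))" for k
  have E: "unitary ?n E" unfolding E_def by (rule unitary_unitary_extend[OF U3])
  have Ec: "E \<in> carrier_mat ?n ?n" using E by auto
  have A'eq: "A' = E * real_diag_mat ?n d * mat_adjoint E"
    unfolding E_def d_def by (rule hermitian_block_diagonalization[OF A'c A'H col0 U3 A3eq[unfolded A3_def]])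
  have "W * A' * mat_adjoint W = W * (mat_adjoint W * (A * (W * mat_adjoint W)))"
    unfolding A'_def using Wc A
    by (simp add: assoc_mult_mat[of _ ?n ?n _ ?n _ ?n] mult_carrier_mat[of _ ?n ?n _ ?n])
  also have "W * mat_adjoint W = 1\<^sub>m ?n" using W unfolding unitary_def by auto
  finally have "A = W * A' * mat_adjoint W" using unitary_adjoint_cancel_right[OF W A] A by simp
  also have "\<dots> = (W * E) * real_diag_mat ?n d * mat_adjoint (W * E)"
    unfolding A'eq using Wc Ec
    by (simp add: mat_adjoint_mult[of _ ?n ?n _ ?n] assoc_mult_mat[of _ ?n ?n _ ?n _ ?n]
      mult_carrier_mat[of _ ?n ?n _ ?n])
  finally show ?case using unitary_mult[OF W E] by blast
qed

section \<open>Positive semidefinite matrices and their square roots\<close>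

lemma unitary_conj_real_diag_square:
  assumes U: "unitary n U"
  shows "(U * real_diag_mat n d * mat_adjoint U) * (U * real_diag_mat n d * mat_adjoint U)
    = U * real_diag_mat n (\<lambda>k. d k * d k) * mat_adjoint U"
proof -
  have Uc: "U \<in> carrier_mat n n" "mat_adjoint U \<in> carrier_mat n n" using U by auto
  have "(U * real_diag_mat n d * mat_adjoint U) * (U * real_diag_mat n d * mat_adjoint U)
      = U * (real_diag_mat n d * (mat_adjoint U * (U * (real_diag_mat n d * mat_adjoint U))))"
    using Uc by (simp add: assoc_mult_mat[of _ n n _ n _ n] mult_carrier_mat[of _ n n _ n])
  also have "mat_adjoint U * (U * (real_diag_mat n d * mat_adjoint U)) = real_diag_mat n d * mat_adjoint U"
    by (rule unitary_adjoint_cancel_left[OF U mult_carrier_mat[OF real_diag_mat_carrier Uc(2)]])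
  also have "U * (real_diag_mat n d * (real_diag_mat n d * mat_adjoint U))
      = U * (real_diag_mat n d * real_diag_mat n d) * mat_adjoint U"
    using Uc by (simp add: assoc_mult_mat[of _ n n _ n _ n] mult_carrier_mat[of _ n n _ n])
  finally show ?thesis by (simp add: real_diag_mat_mult)
qed

lemma hermitian_unitary_conj_real_diag:
  assumes "U \<in> carrier_mat n n"
  shows "mat_adjoint (U * real_diag_mat n d * mat_adjoint U) = U * real_diag_mat n d * mat_adjoint U"
  using assms
  by (simp add: mat_adjoint_mult[of _ n n _ n] assoc_mult_mat[of _ n n _ n _ n] mult_carrier_mat[of _ n n _ n])

lemma mtrace_unitary_conj_real_diag:
  assumes U: "unitary n U"
  shows "mtrace (U * real_diag_mat n d * mat_adjoint U) = (\<Sum>k<n. complex_of_real (d k))"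
proof -
  have Uc: "U \<in> carrier_mat n n" using U by auto
  have "mtrace (U * real_diag_mat n d * mat_adjoint U)
      = (\<Sum>i<n. (U * real_diag_mat n d * mat_adjoint U) $$ (i, i))"
    by (rule mtrace_carrier) (use Uc in auto)
  also have "\<dots> = (\<Sum>i<n. \<Sum>k<n. U $$ (i, k) * of_real (d k) * cnj (U $$ (i, k)))"
    by (rule sum.cong[OF refl], rule index_unitary_conj_real_diag[OF Uc]) auto
  also have "\<dots> = (\<Sum>k<n. of_real (d k) * (\<Sum>i<n. cnj (U $$ (i, k)) * U $$ (i, k)))"
    by (subst sum.swap) (simp add: sum_distrib_left mult_ac)
  also have "\<dots> = (\<Sum>k<n. of_real (d k))" by (rule sum.cong) (auto simp: unitary_col_orthonormal[OF U])
  finally show ?thesis .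
qed

lemma psd_unitary_conj_real_diag_nonneg:
  assumes P: "is_psd n (U * real_diag_mat n d * mat_adjoint U)" and U: "unitary n U" and k: "k < n"
  shows "0 \<le> d k"
proof -
  let ?S = "U * real_diag_mat n d * mat_adjoint U"
  have Uc: "U \<in> carrier_mat n n" using U by auto
  have v: "col U k \<in> carrier_vec n" using Uc by auto
  have "mat_adjoint U * U = 1\<^sub>m n" using U unfolding unitary_def by auto
  hence SU: "?S * U = U * real_diag_mat n d"
    using Uc by (simp add: assoc_mult_mat[of _ n n _ n _ n] mult_carrier_mat[of _ n n _ n])
  have "conjugate (col U k) \<bullet> (?S *\<^sub>v col U k) = (\<Sum>i<n. cnj (U $$ (i, k)) * (?S * U) $$ (i, k))"
    unfolding quadratic_form_sum[OF _ v, of ?S] using Uc k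
    by (auto simp: scalar_prod_def atLeast0LessThan intro!: sum.cong)
  also have "\<dots> = (mat_adjoint U * (?S * U)) $$ (k, k)"
    using Uc k by (subst index_mult_mat_carrier[of _ n n _ n]) auto
  also have "\<dots> = of_real (d k)"
    unfolding SU unitary_adjoint_cancel_left[OF U real_diag_mat_carrier] using k
    by (simp add: real_diag_mat_def)
  finally show ?thesis using P v unfolding is_psd_def by force
qed

lemma psd_unitary_conj_real_diag:
  assumes U: "unitary n U" and d: "\<forall>k<n. 0 \<le> d k"
  shows "is_psd n (U * real_diag_mat n d * mat_adjoint U)"
proof -
  let ?S = "U * real_diag_mat n d * mat_adjoint U"
  have Uc: "U \<in> carrier_mat n n" using U by auto
  have Sc: "?S \<in> carrier_mat n n" using Uc by auto
  have "0 \<le> Re (conjugate v \<bullet> (?S *\<^sub>v v))" if v: "v \<in> carrier_vec n" for v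
  proof -
    define w where "w k = (\<Sum>j<n. cnj (U $$ (j, k)) * v $ j)" for k
    have "conjugate v \<bullet> (?S *\<^sub>v v) = (\<Sum>i<n. cnj (v $ i)
        * (\<Sum>j<n. (\<Sum>k<n. U $$ (i, k) * of_real (d k) * cnj (U $$ (j, k))) * v $ j))"
      unfolding quadratic_form_sum[OF Sc v]
      by (intro sum.cong refl arg_cong2[where f = "(*)"])
        (simp_all add: index_unitary_conj_real_diag[OF Uc] del: index_mult_mat)
    also have "\<dots> = (\<Sum>i<n. \<Sum>j<n. \<Sum>k<n.
        of_real (d k) * ((cnj (v $ i) * U $$ (i, k)) * (cnj (U $$ (j, k)) * v $ j)))"
      unfolding sum_distrib_left sum_distrib_right by (intro sum.cong refl) (simp add: mult_ac)
    also have "\<dots> = (\<Sum>k<n. \<Sum>i<n. \<Sum>j<n.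
        of_real (d k) * ((cnj (v $ i) * U $$ (i, k)) * (cnj (U $$ (j, k)) * v $ j)))"
      by (rule sum_swap3)
    also have "\<dots> = (\<Sum>k<n. of_real (d k)
        * ((\<Sum>i<n. cnj (v $ i) * U $$ (i, k)) * (\<Sum>j<n. cnj (U $$ (j, k)) * v $ j)))"
      unfolding sum_product by (simp only: sum_distrib_left)
    also have "\<dots> = (\<Sum>k<n. of_real (d k) * (cnj (w k) * w k))"
    proof -
      have "(\<Sum>i<n. cnj (v $ i) * U $$ (i, k)) = cnj (w k)" for k
        unfolding w_def by (simp add: cnj_sum mult.commute)
      thus ?thesis by (simp only: w_def)
    qed
    also have "\<dots> = of_real (\<Sum>k<n. d k * (cmod (w k))\<^sup>2)"
      unfolding of_real_sum of_real_mult complex_norm_square by (simp add: mult.commute)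
    finally show ?thesis using d by (auto intro!: sum_nonneg)
  qed
  thus ?thesis unfolding is_psd_def using Uc hermitian_unitary_conj_real_diag[OF Uc] by auto
qed

lemma psd_unitary_diagonalization:
  assumes P: "is_psd n A"
  obtains U d where "unitary n U" "\<And>k. k < n \<Longrightarrow> 0 \<le> d k" "A = U * real_diag_mat n d * mat_adjoint U"
proof -
  have "A \<in> carrier_mat n n" "mat_adjoint A = A" using P unfolding is_psd_def by auto
  then obtain U d where U: "unitary n U" and A: "A = U * real_diag_mat n d * mat_adjoint U"
    using hermitian_unitary_diagonalization by blast
  show ?thesis using that[OF U _ A] psd_unitary_conj_real_diag_nonneg[OF P[unfolded A] U] by blast
qed

lemma psd_adjoint_mult_self:
  fixes X :: "complex mat"
  assumes Xc: "X \<in> carrier_mat m n"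
  shows "is_psd n (mat_adjoint X * X)"
proof -
  let ?P = "mat_adjoint X * X"
  have Pc: "?P \<in> carrier_mat n n" using Xc by auto
  have "0 \<le> Re (conjugate v \<bullet> (?P *\<^sub>v v))" if v: "v \<in> carrier_vec n" for v
  proof -
    define y where "y r = (\<Sum>j<n. X $$ (r, j) * v $ j)" for r
    have "conjugate v \<bullet> (?P *\<^sub>v v)
        = (\<Sum>i<n. cnj (v $ i) * (\<Sum>j<n. (\<Sum>r<m. cnj (X $$ (r, i)) * X $$ (r, j)) * v $ j))"
      unfolding quadratic_form_sum[OF Pc v] using Xc
      by (intro sum.cong refl arg_cong2[where f = "(*)"])
        (auto simp: index_mult_mat_carrier[of _ n m _ n] simp del: index_mult_mat)
    also have "\<dots> = (\<Sum>i<n. \<Sum>j<n. \<Sum>r<m. (cnj (X $$ (r, i)) * cnj (v $ i)) * (X $$ (r, j) * v $ j))"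
      unfolding sum_distrib_left sum_distrib_right by (intro sum.cong refl) (simp add: mult_ac)
    also have "\<dots> = (\<Sum>r<m. \<Sum>i<n. \<Sum>j<n. (cnj (X $$ (r, i)) * cnj (v $ i)) * (X $$ (r, j) * v $ j))"
      by (rule sum_swap3)
    also have "\<dots> = (\<Sum>r<m. cnj (y r) * y r)"
      unfolding y_def cnj_sum sum_product by simp
    also have "\<dots> = of_real (\<Sum>r<m. (cmod (y r))\<^sup>2)"
      unfolding of_real_sum complex_norm_square by (simp add: mult.commute)
    finally show ?thesis by (simp add: sum_nonneg)
  qed
  moreover have "mat_adjoint ?P = ?P" using Xc by (simp add: mat_adjoint_mult[of _ n m _ n])
  ultimately show ?thesis unfolding is_psd_def using Pc by auto
qed

lemma psd_sqrt_exists: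
  assumes P: "is_psd n P"
  shows "\<exists>S. is_psd n S \<and> S * S = P"
proof -
  obtain U d where U: "unitary n U" and d: "\<And>k. k < n \<Longrightarrow> 0 \<le> d k"
    and P_eq: "P = U * real_diag_mat n d * mat_adjoint U"
    using psd_unitary_diagonalization[OF P] by blast
  define S where "S = U * real_diag_mat n (\<lambda>k. sqrt (d k)) * mat_adjoint U"
  have "is_psd n S" unfolding S_def by (rule psd_unitary_conj_real_diag[OF U]) (use d in auto)
  moreover have "S * S = P" unfolding S_def unitary_conj_real_diag_square[OF U] P_eq
    using d by (auto intro!: arg_cong[where f = "\<lambda>D. U * D * mat_adjoint U"] real_diag_mat_cong)
  ultimately show ?thesis by blast
qed

lemma real_diag_mat_commute_sqrt:
  assumes X: "X \<in> carrier_mat n n" and d: "\<And>k. k < n \<Longrightarrow> 0 \<le> d k" and e: "\<And>k. k < n \<Longrightarrow> 0 \<le> e k"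
    and comm: "real_diag_mat n (\<lambda>k. d k * d k) * X = X * real_diag_mat n (\<lambda>k. e k * e k)"
  shows "real_diag_mat n d * X = X * real_diag_mat n e"
proof (rule eq_matI)
  fix i j assume "i < dim_row (X * real_diag_mat n e)" "j < dim_col (X * real_diag_mat n e)"
  hence i: "i < n" and j: "j < n" using X by auto
  have "(real_diag_mat n (\<lambda>k. d k * d k) * X) $$ (i, j) = (X * real_diag_mat n (\<lambda>k. e k * e k)) $$ (i, j)"
    using comm by simp
  hence sq: "complex_of_real (d i * d i) * X $$ (i, j) = complex_of_real (e j * e j) * X $$ (i, j)"
    unfolding index_real_diag_mat_mult[OF X i j] index_mult_real_diag_mat[OF X i j] by (simp only: mult.commute)
  have "d i = e j" if "X $$ (i, j) \<noteq> 0"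
  proof -
    have "(d i)\<^sup>2 = (e j)\<^sup>2" using mult_right_cancel[OF that] sq by (simp only: of_real_eq_iff power2_eq_square)
    thus ?thesis using d[OF i] e[OF j] by (simp add: power2_eq_iff_nonneg)
  qed
  hence "of_real (d i) * X $$ (i, j) = X $$ (i, j) * of_real (e j)" by (cases "X $$ (i, j) = 0") auto
  thus "(real_diag_mat n d * X) $$ (i, j) = (X * real_diag_mat n e) $$ (i, j)"
    by (simp only: index_real_diag_mat_mult[OF X i j] index_mult_real_diag_mat[OF X i j])
qed (use X in auto)

text \<open>Diagonalize both roots; the change of basis between the two eigenbases commutes with the
  squared spectra, hence with the spectra themselves.\<close>

lemma psd_sqrt_unique:
  assumes S: "is_psd n S" and T: "is_psd n T" and ST: "S * S = T * T"
  shows "S = T"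
proof -
  obtain U d where U: "unitary n U" and d: "\<And>k. k < n \<Longrightarrow> 0 \<le> d k"
    and S_eq: "S = U * real_diag_mat n d * mat_adjoint U"
    using psd_unitary_diagonalization[OF S] by blast
  obtain V e where V: "unitary n V" and e: "\<And>k. k < n \<Longrightarrow> 0 \<le> e k"
    and T_eq: "T = V * real_diag_mat n e * mat_adjoint V"
    using psd_unitary_diagonalization[OF T] by blast
  have Uc: "U \<in> carrier_mat n n" and Vc: "V \<in> carrier_mat n n" using U V by auto
  have VV: "mat_adjoint V * V = 1\<^sub>m n" "V * mat_adjoint V = 1\<^sub>m n" using V unfolding unitary_def by auto
  define X where "X = mat_adjoint U * V"
  have Xc: "X \<in> carrier_mat n n" unfolding X_def using Uc Vc by auto
  let ?D2 = "real_diag_mat n (\<lambda>k. d k * d k)" and ?E2 = "real_diag_mat n (\<lambda>k. e k * e k)"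
  have "mat_adjoint U * (U * ?D2 * mat_adjoint U) * V = ?D2 * X"
    using unitary_adjoint_cancel_left[OF U mult_carrier_mat[OF real_diag_mat_carrier Xc]] Uc Vc
    unfolding X_def by (simp add: assoc_mult_mat[of _ n n _ n _ n] mult_carrier_mat[of _ n n _ n])
  hence "?D2 * X = mat_adjoint U * (U * ?D2 * mat_adjoint U) * V" ..
  also have "U * ?D2 * mat_adjoint U = V * ?E2 * mat_adjoint V"
    using ST unfolding S_eq T_eq unitary_conj_real_diag_square[OF U] unitary_conj_real_diag_square[OF V] .
  also have "mat_adjoint U * (V * ?E2 * mat_adjoint V) * V = X * ?E2"
    unfolding X_def using Uc Vc VV
    by (simp add: assoc_mult_mat[of _ n n _ n _ n] mult_carrier_mat[of _ n n _ n] right_mult_one_mat)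
  finally have "?D2 * X = X * ?E2" .
  hence "real_diag_mat n d * X = X * real_diag_mat n e"
    using real_diag_mat_commute_sqrt[of X n d e] Xc d e by blast
  hence "S * V = T * V"
    unfolding S_eq T_eq X_def
    using Uc Vc VV unitary_adjoint_cancel_right[OF U mult_carrier_mat[OF Vc real_diag_mat_carrier]]
    by (simp add: assoc_mult_mat[of _ n n _ n _ n] mult_carrier_mat[of _ n n _ n] right_mult_one_mat)
  hence "S * V * mat_adjoint V = T * V * mat_adjoint V" by simp
  moreover have Sc: "S \<in> carrier_mat n n" and Tc: "T \<in> carrier_mat n n"
    using S T unfolding is_psd_def by auto
  ultimately have "S * 1\<^sub>m n = T * 1\<^sub>m n" using VV Vc by (simp add: assoc_mult_mat[of _ n n _ n _ n])
  thus ?thesis using right_mult_one_mat[OF Sc] right_mult_one_mat[OF Tc] by simp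
qed

lemma psd_sqrt:
  assumes P: "is_psd n P"
  shows "is_psd n (psd_sqrt P)" and "psd_sqrt P * psd_sqrt P = P"
proof -
  have dim: "dim_row P = n" using P unfolding is_psd_def by auto
  obtain S where S: "is_psd n S \<and> S * S = P" using psd_sqrt_exists[OF P] by auto
  have "is_psd n (psd_sqrt P) \<and> psd_sqrt P * psd_sqrt P = P"
    unfolding psd_sqrt_def dim by (rule theI[of _ S]) (use S psd_sqrt_unique in blast)+
  thus "is_psd n (psd_sqrt P)" and "psd_sqrt P * psd_sqrt P = P" by auto
qed

section \<open>The trace norm of a combination of rank-one matrices\<close>

lemma cmod_diff_square: "(cmod (z - w))\<^sup>2 = (cmod z)\<^sup>2 - 2 * Re (cnj w * z) + (cmod w)\<^sup>2"
  by (simp only: cmod_power2) (simp add: power2_eq_square algebra_simps)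

lemma cmod_square_eq_Re: "(cmod z)\<^sup>2 = Re (cnj z * z)"
  by (simp only: cmod_power2) (simp add: power2_eq_square)

lemma cmod_sum_mult_le_L2_set:
  "cmod (\<Sum>k\<in>K. a k * b k) \<le> L2_set (\<lambda>k. cmod (a k)) K * L2_set (\<lambda>k. cmod (b k)) K"
proof -
  have "cmod (\<Sum>k\<in>K. a k * b k) \<le> (\<Sum>k\<in>K. \<bar>cmod (a k)\<bar> * \<bar>cmod (b k)\<bar>)"
    by (rule order_trans[OF norm_sum]) (simp add: norm_mult)
  also have "\<dots> \<le> L2_set (\<lambda>k. cmod (a k)) K * L2_set (\<lambda>k. cmod (b k)) K"
    by (rule L2_set_mult_ineq)
  finally show ?thesis .
qed

text \<open>The zero vectors allowed by \<open>P\<close> come from vanishing singular values.\<close>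

lemma bessel_inequality:
  fixes q :: "nat \<Rightarrow> nat \<Rightarrow> complex" and u :: "nat \<Rightarrow> complex"
  assumes orth: "\<And>j k. j < n \<Longrightarrow> k < n \<Longrightarrow> (\<Sum>r<m. cnj (q j r) * q k r) = (if j = k \<and> P k then 1 else 0)"
  shows "(\<Sum>k<n. (cmod (\<Sum>r<m. cnj (q k r) * u r))\<^sup>2) \<le> (\<Sum>r<m. (cmod (u r))\<^sup>2)"
proof -
  define a where "a k = (\<Sum>r<m. cnj (q k r) * u r)" for k
  define v where "v r = (\<Sum>k<n. a k * q k r)" for r
  have a0: "a k = 0" if k: "k < n" "\<not> P k" for k
  proof -
    have "complex_of_real (\<Sum>r<m. (cmod (q k r))\<^sup>2) = (\<Sum>r<m. cnj (q k r) * q k r)"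
      unfolding of_real_sum complex_norm_square by (simp add: mult.commute)
    also have "\<dots> = 0" using orth[OF k(1) k(1)] k(2) by simp
    finally have "(\<Sum>r<m. (cmod (q k r))\<^sup>2) = 0" by (simp only: of_real_eq_0_iff)
    hence "\<forall>r<m. q k r = 0" by (simp add: sum_nonneg_eq_0_iff)
    thus ?thesis unfolding a_def by simp
  qed
  have coeff: "(\<Sum>r<m. cnj (q k r) * v r) = a k" if k: "k < n" for k
  proof -
    have "(\<Sum>r<m. cnj (q k r) * v r) = (\<Sum>r<m. \<Sum>l<n. a l * (cnj (q k r) * q l r))"
      unfolding v_def by (simp add: sum_distrib_left mult_ac)
    also have "\<dots> = (\<Sum>l<n. a l * (\<Sum>r<m. cnj (q k r) * q l r))"
      by (subst sum.swap) (simp add: sum_distrib_left)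
    also have "\<dots> = (\<Sum>l<n. if l = k then (if P k then a k else 0) else 0)"
      by (rule sum.cong) (auto simp: orth k)
    also have "\<dots> = a k" using k a0[OF k] by simp
    finally show ?thesis .
  qed
  have cnj_v: "cnj (v r) = (\<Sum>k<n. cnj (a k) * cnj (q k r))" for r by (simp add: v_def)
  have cnj_v_sum: "(\<Sum>r<m. cnj (v r) * f r) = (\<Sum>k<n. cnj (a k) * (\<Sum>r<m. cnj (q k r) * f r))" for f
  proof -
    have "(\<Sum>r<m. cnj (v r) * f r) = (\<Sum>r<m. \<Sum>k<n. cnj (a k) * (cnj (q k r) * f r))"
      unfolding cnj_v sum_distrib_right by (simp add: mult_ac)
    also have "\<dots> = (\<Sum>k<n. cnj (a k) * (\<Sum>r<m. cnj (q k r) * f r))"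
      by (subst sum.swap) (simp add: sum_distrib_left)
    finally show ?thesis .
  qed
  have vu: "(\<Sum>r<m. cnj (v r) * u r) = (\<Sum>k<n. cnj (a k) * a k)"
    unfolding cnj_v_sum a_def ..
  have vv: "(\<Sum>r<m. cnj (v r) * v r) = (\<Sum>k<n. cnj (a k) * a k)"
    unfolding cnj_v_sum by (simp add: coeff)
  have aa: "Re (\<Sum>k<n. cnj (a k) * a k) = (\<Sum>k<n. (cmod (a k))\<^sup>2)"
    by (simp add: cmod_square_eq_Re)
  have "0 \<le> (\<Sum>r<m. (cmod (u r - v r))\<^sup>2)" by (simp add: sum_nonneg)
  also have "\<dots> = (\<Sum>r<m. (cmod (u r))\<^sup>2) - 2 * Re (\<Sum>r<m. cnj (v r) * u r) + Re (\<Sum>r<m. cnj (v r) * v r)"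
    unfolding cmod_diff_square by (simp add: sum.distrib sum_subtractf sum_distrib_left cmod_square_eq_Re)
  also have "\<dots> = (\<Sum>r<m. (cmod (u r))\<^sup>2) - (\<Sum>k<n. (cmod (a k))\<^sup>2)"
    unfolding vu vv aa by simp
  finally show ?thesis unfolding a_def by simp
qed

lemma sum_cmod_square_mult_unitary_le:
  assumes U: "unitary n U"
  shows "(\<Sum>k<n. (cmod (\<Sum>c<n. w c * U $$ (c, k)))\<^sup>2) \<le> (\<Sum>c<n. (cmod (w c))\<^sup>2)"
proof -
  have "(\<Sum>k<n. (cmod (\<Sum>c<n. cnj (cnj (U $$ (c, k))) * w c))\<^sup>2) \<le> (\<Sum>c<n. (cmod (w c))\<^sup>2)"
  proof (rule bessel_inequality[where P = "\<lambda>_. True"])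
    fix j k assume "j < n" "k < n"
    thus "(\<Sum>r<n. cnj (cnj (U $$ (r, j))) * cnj (U $$ (r, k))) = (if j = k \<and> True then 1 else 0)"
      using unitary_col_orthonormal[OF U, of k j] by (simp add: mult.commute)
  qed
  thus ?thesis by (simp add: mult.commute)
qed

lemma trace_norm_singular_values:
  fixes X :: "complex mat"
  assumes Xc: "X \<in> carrier_mat m n"
  obtains U d where "unitary n U" "\<And>k. k < n \<Longrightarrow> 0 \<le> d k" "trace_norm X = (\<Sum>k<n. d k)"
    "mat_adjoint (X * U) * (X * U) = real_diag_mat n (\<lambda>k. d k * d k)"
proof -
  let ?P = "mat_adjoint X * X"
  define S where "S = psd_sqrt ?P"
  have S: "is_psd n S" and SS: "S * S = ?P"
    unfolding S_def using psd_sqrt[OF psd_adjoint_mult_self[OF Xc]] by auto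
  obtain U d where U: "unitary n U" and d: "\<And>k. k < n \<Longrightarrow> 0 \<le> d k"
    and S_eq: "S = U * real_diag_mat n d * mat_adjoint U"
    using psd_unitary_diagonalization[OF S] by blast
  have Uc: "U \<in> carrier_mat n n" using U by auto
  have UU: "mat_adjoint U * U = 1\<^sub>m n" using U unfolding unitary_def by auto
  have "trace_norm X = (\<Sum>k<n. d k)"
    unfolding trace_norm_def S_def[symmetric] S_eq mtrace_unitary_conj_real_diag[OF U] by simp
  moreover have "mat_adjoint (X * U) * (X * U) = real_diag_mat n (\<lambda>k. d k * d k)"
  proof -
    have "mat_adjoint (X * U) * (X * U) = mat_adjoint U * (?P * U)"
      using Xc Uc by (simp add: mat_adjoint_mult[of _ m n _ n] assoc_mult_mat[of _ n m _ n _ n]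
        assoc_mult_mat[of _ n n _ m _ n])
    also have "?P * U = U * real_diag_mat n (\<lambda>k. d k * d k) * (mat_adjoint U * U)"
      unfolding SS[symmetric] S_eq unitary_conj_real_diag_square[OF U] using Uc
      by (simp add: assoc_mult_mat[of _ n n _ n _ n] mult_carrier_mat[of _ n n _ n])
    finally show ?thesis
      using Uc UU unitary_adjoint_cancel_left[OF U real_diag_mat_carrier] by simp
  qed
  ultimately show ?thesis using that U d by blast
qed

lemma orthogonal_cols_normalize:
  fixes Y :: "complex mat"
  assumes Yc: "Y \<in> carrier_mat m n" and d: "\<And>k. k < n \<Longrightarrow> 0 \<le> d k"
    and YY: "mat_adjoint Y * Y = real_diag_mat n (\<lambda>k. d k * d k)"
  defines "q k r \<equiv> if 0 < d k then Y $$ (r, k) / of_real (d k) else 0"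
  shows "\<And>j k. j < n \<Longrightarrow> k < n \<Longrightarrow> (\<Sum>r<m. cnj (q j r) * q k r) = (if j = k \<and> 0 < d k then 1 else 0)"
    and "\<And>k. k < n \<Longrightarrow> complex_of_real (d k) = (\<Sum>r<m. cnj (q k r) * Y $$ (r, k))"
proof -
  have col: "(\<Sum>r<m. cnj (Y $$ (r, j)) * Y $$ (r, k)) = (if j = k then of_real (d k * d k) else 0)"
    if "j < n" "k < n" for j k
  proof -
    have "(\<Sum>r<m. cnj (Y $$ (r, j)) * Y $$ (r, k)) = (mat_adjoint Y * Y) $$ (j, k)"
      using Yc that by (subst index_mult_mat_carrier[of _ n m _ n]) (auto intro!: sum.cong)
    thus ?thesis unfolding YY using that by (simp add: real_diag_mat_def)
  qed
  show "(\<Sum>r<m. cnj (q j r) * q k r) = (if j = k \<and> 0 < d k then 1 else 0)" if "j < n" "k < n" for j k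
  proof (cases "0 < d j \<and> 0 < d k")
    case True
    have "(\<Sum>r<m. cnj (q j r) * q k r) = (\<Sum>r<m. cnj (Y $$ (r, j)) * Y $$ (r, k)) / (of_real (d j) * of_real (d k))"
      unfolding q_def using True by (simp add: sum_divide_distrib)
    thus ?thesis unfolding col[OF that] using True by auto
  qed (auto simp: q_def)
  show "complex_of_real (d k) = (\<Sum>r<m. cnj (q k r) * Y $$ (r, k))" if k: "k < n" for k
  proof (cases "0 < d k")
    case True
    have "(\<Sum>r<m. cnj (q k r) * Y $$ (r, k)) = (\<Sum>r<m. cnj (Y $$ (r, k)) * Y $$ (r, k)) / of_real (d k)"
      unfolding q_def using True by (simp add: sum_divide_distrib)
    thus ?thesis unfolding col[OF k k] using True by simp
  qed (use d[OF k] in \<open>auto simp: q_def\<close>)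
qed

lemma index_mult_rank_one_combination:
  fixes X U :: "complex mat" and p :: "nat \<Rightarrow> real"
  assumes Xc: "X \<in> carrier_mat m n"
    and X_eq: "\<And>r c. r < m \<Longrightarrow> c < n \<Longrightarrow> X $$ (r, c) = (\<Sum>i<N. of_real (p i) * (u i r * w i c))"
    and Uc: "U \<in> carrier_mat n k" and r: "r < m" and j: "j < k"
  shows "(X * U) $$ (r, j) = (\<Sum>i<N. of_real (p i) * (u i r * (\<Sum>c<n. w i c * U $$ (c, j))))"
proof -
  have "(X * U) $$ (r, j) = (\<Sum>c<n. (\<Sum>i<N. of_real (p i) * (u i r * w i c)) * U $$ (c, j))"
    using Xc Uc r j by (subst index_mult_mat_carrier[of _ m n _ k]) (auto simp: X_eq simp del: index_mult_mat)
  also have "\<dots> = (\<Sum>c<n. \<Sum>i<N. of_real (p i) * (u i r * (w i c * U $$ (c, j))))"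
    unfolding sum_distrib_right by (simp add: mult_ac)
  also have "\<dots> = (\<Sum>i<N. of_real (p i) * (u i r * (\<Sum>c<n. w i c * U $$ (c, j))))"
    by (subst sum.swap) (simp add: sum_distrib_left)
  finally show ?thesis .
qed

text \<open>With \<open>Y = X * U\<close> and \<open>q k\<close> its normalized columns, \<open>d k = \<langle>q k, Y e\<^sub>k\<rangle>\<close>; expanding \<open>Y\<close> along
  the rank-one terms turns the trace norm into \<open>\<Sum>\<^sub>i p\<^sub>i \<Sum>\<^sub>k \<langle>q k, u\<^sub>i\<rangle> (w\<^sub>i U)\<^sub>k\<close>, which
  Cauchy-Schwarz and Bessel's inequality bound.\<close>

theorem trace_norm_le_rank_one_combination:
  fixes X :: "complex mat" and p :: "nat \<Rightarrow> real" and u w :: "nat \<Rightarrow> nat \<Rightarrow> complex"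
  assumes Xc: "X \<in> carrier_mat m n"
    and X_eq: "\<And>r c. r < m \<Longrightarrow> c < n \<Longrightarrow> X $$ (r, c) = (\<Sum>i<N. of_real (p i) * (u i r * w i c))"
    and p: "\<And>i. i < N \<Longrightarrow> 0 \<le> p i"
  shows "trace_norm X
    \<le> (\<Sum>i<N. p i * (L2_set (\<lambda>r. cmod (u i r)) {..<m} * L2_set (\<lambda>c. cmod (w i c)) {..<n}))"
proof -
  obtain U d where U: "unitary n U" and d: "\<And>k. k < n \<Longrightarrow> 0 \<le> d k"
    and tn: "trace_norm X = (\<Sum>k<n. d k)"
    and YY: "mat_adjoint (X * U) * (X * U) = real_diag_mat n (\<lambda>k. d k * d k)"
    using trace_norm_singular_values[OF Xc] by blast
  have Uc: "U \<in> carrier_mat n n" using U by auto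
  have Yc: "X * U \<in> carrier_mat m n" using Xc Uc by auto
  define q where "q k r = (if 0 < d k then (X * U) $$ (r, k) / of_real (d k) else 0)" for k r
  note q = orthogonal_cols_normalize[OF Yc d YY, folded q_def]
  define z where "z i k = (\<Sum>c<n. w i c * U $$ (c, k))" for i k
  define a where "a i k = (\<Sum>r<m. cnj (q k r) * u i r)" for i k
  have Y_eq: "(X * U) $$ (r, k) = (\<Sum>i<N. of_real (p i) * (u i r * z i k))" if "r < m" "k < n" for r k
    unfolding z_def by (rule index_mult_rank_one_combination[OF Xc X_eq Uc that])
  have "(\<Sum>k<n. complex_of_real (d k)) = (\<Sum>k<n. \<Sum>r<m. \<Sum>i<N. cnj (q k r) * (of_real (p i) * (u i r * z i k)))"
    by (rule sum.cong[OF refl]) (simp add: q(2) Y_eq sum_distrib_left)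
  also have "\<dots> = (\<Sum>i<N. \<Sum>k<n. \<Sum>r<m. cnj (q k r) * (of_real (p i) * (u i r * z i k)))"
    by (rule sum_swap3)
  also have "\<dots> = (\<Sum>i<N. of_real (p i) * (\<Sum>k<n. a i k * z i k))"
    unfolding a_def by (simp add: sum_distrib_left sum_distrib_right mult_ac)
  finally have "trace_norm X = Re (\<Sum>i<N. of_real (p i) * (\<Sum>k<n. a i k * z i k))"
    unfolding tn by (metis Re_complex_of_real of_real_sum)
  also have "\<dots> \<le> (\<Sum>i<N. p i * cmod (\<Sum>k<n. a i k * z i k))"
    by (rule order_trans[OF complex_Re_le_cmod order_trans[OF norm_sum]]) (auto simp: norm_mult p)
  also have "\<dots> \<le> (\<Sum>i<N. p i * (L2_set (\<lambda>r. cmod (u i r)) {..<m} * L2_set (\<lambda>c. cmod (w i c)) {..<n}))"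
  proof (rule sum_mono, rule mult_left_mono)
    fix i assume "i \<in> {..<N}"
    thus "0 \<le> p i" using p by auto
    have "L2_set (\<lambda>k. cmod (a i k)) {..<n} \<le> L2_set (\<lambda>r. cmod (u i r)) {..<m}"
      unfolding L2_set_def a_def by (rule real_sqrt_le_mono, rule bessel_inequality, rule q(1))
    moreover have "L2_set (\<lambda>k. cmod (z i k)) {..<n} \<le> L2_set (\<lambda>c. cmod (w i c)) {..<n}"
      unfolding L2_set_def z_def by (rule real_sqrt_le_mono, rule sum_cmod_square_mult_unitary_le[OF U])
    ultimately have "L2_set (\<lambda>k. cmod (a i k)) {..<n} * L2_set (\<lambda>k. cmod (z i k)) {..<n}
        \<le> L2_set (\<lambda>r. cmod (u i r)) {..<m} * L2_set (\<lambda>c. cmod (w i c)) {..<n}"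
      by (rule mult_mono) (auto intro: L2_set_nonneg)
    thus "cmod (\<Sum>k<n. a i k * z i k)
        \<le> L2_set (\<lambda>r. cmod (u i r)) {..<m} * L2_set (\<lambda>c. cmod (w i c)) {..<n}"
      using cmod_sum_mult_le_L2_set[of "a i" "z i" "{..<n}"] by linarith
  qed
  finally show ?thesis .
qed

section \<open>The probabilities of a GSICPOVM\<close>

lemma GSICPOVM_dim_ge_2:
  assumes "is_GSICPOVM d a M"
  shows "2 \<le> d"
proof (rule ccontr)
  assume "\<not> 2 \<le> d"
  hence "d = 0 \<or> d = 1" by auto
  thus False using assms unfolding is_GSICPOVM_def by auto
qed

lemma GSICPOVM_overlap_identities:
  fixes a b D :: real
  assumes D: "2 \<le> D" and aD: "1 < a * D ^ 3" and b: "b = (1 - D * a) / (D * (D\<^sup>2 - 1))"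
  shows "0 < a - b" and "1 - b * D ^ 3 = D * (a - b)" and "a - b + b * D\<^sup>2 = 1 / D"
    and "a - b + b * D = (a * D\<^sup>2 + 1) / (D * (D + 1))"
proof -
  have "2 * 2 \<le> D * D" using mult_mono[OF D D] D by simp
  hence "1 < D\<^sup>2" by (simp add: power2_eq_square)
  hence den: "0 < D * (D\<^sup>2 - 1)" using D by simp
  have "D \<noteq> 0" "D\<^sup>2 \<noteq> 1" using D \<open>1 < D\<^sup>2\<close> by linarith+
  hence bD: "b * (D * (D\<^sup>2 - 1)) = 1 - D * a" unfolding b by simp
  have "(a - b) * (D * (D\<^sup>2 - 1)) = a * D ^ 3 - 1"
    using bD by (simp add: algebra_simps power2_eq_square power3_eq_cube)
  hence "0 < (a - b) * (D * (D\<^sup>2 - 1))" using aD by simp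
  thus "0 < a - b" by (rule zero_less_mult_pos2[OF _ den])
  show "1 - b * D ^ 3 = D * (a - b)"
    using bD by (simp add: algebra_simps power2_eq_square power3_eq_cube)
  have "D * (a - b + b * D\<^sup>2) = 1"
    using bD by (simp add: algebra_simps power2_eq_square)
  thus "a - b + b * D\<^sup>2 = 1 / D" using D by (simp add: field_simps)
  have "(a - b + b * D) * (D * (D + 1)) = a * D\<^sup>2 + 1"
    using bD by (simp add: algebra_simps power2_eq_square)
  moreover have "D * (D + 1) \<noteq> 0" using D by simp
  ultimately show "a - b + b * D = (a * D\<^sup>2 + 1) / (D * (D + 1))"
    by (subst eq_divide_eq) simp
qed

lemma quadratic_form_uniform_gram:
  fixes \<gamma> :: "nat \<Rightarrow> real"
  shows "(\<Sum>\<alpha><N. \<Sum>\<beta><N. \<gamma> \<alpha> * \<gamma> \<beta> * (if \<alpha> = \<beta> then a else b))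
    = b * (\<Sum>\<alpha><N. \<gamma> \<alpha>)\<^sup>2 + (a - b) * (\<Sum>\<alpha><N. (\<gamma> \<alpha>)\<^sup>2)"
proof -
  have "(\<Sum>\<beta><N. \<gamma> \<alpha> * \<gamma> \<beta> * (if \<alpha> = \<beta> then a else b))
      = b * (\<gamma> \<alpha> * (\<Sum>\<beta><N. \<gamma> \<beta>)) + (a - b) * (\<gamma> \<alpha>)\<^sup>2" if "\<alpha> < N" for \<alpha>
  proof -
    have "(\<Sum>\<beta><N. \<gamma> \<alpha> * \<gamma> \<beta> * (if \<alpha> = \<beta> then a else b))
        = (\<Sum>\<beta><N. b * (\<gamma> \<alpha> * \<gamma> \<beta>) + (if \<beta> = \<alpha> then (a - b) * (\<gamma> \<alpha>)\<^sup>2 else 0))"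
      by (rule sum.cong) (auto simp: algebra_simps power2_eq_square)
    thus ?thesis using that by (simp add: sum.distrib sum_distrib_left)
  qed
  hence "(\<Sum>\<alpha><N. \<Sum>\<beta><N. \<gamma> \<alpha> * \<gamma> \<beta> * (if \<alpha> = \<beta> then a else b))
      = (\<Sum>\<alpha><N. b * (\<gamma> \<alpha> * (\<Sum>\<beta><N. \<gamma> \<beta>)) + (a - b) * (\<gamma> \<alpha>)\<^sup>2)"
    by (intro sum.cong) auto
  also have "\<dots> = b * (\<Sum>\<alpha><N. \<gamma> \<alpha>)\<^sup>2 + (a - b) * (\<Sum>\<alpha><N. (\<gamma> \<alpha>)\<^sup>2)"
    by (simp add: sum.distrib sum_distrib_left[symmetric] sum_distrib_right[symmetric] power2_eq_square)
  finally show ?thesis .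
qed

text \<open>The Gram inequality is tested at \<open>\<gamma>\<^sub>\<alpha> = (x\<^sub>\<alpha> - b D) / (a - b)\<close>, the coefficients that would
  reconstruct \<open>\<rho> = \<Sum>\<^sub>\<alpha> \<gamma>\<^sub>\<alpha> M\<^sub>\<alpha>\<close>; it then yields \<open>\<Sum>\<^sub>\<alpha> x\<^sub>\<alpha>\<^sup>2 \<le> (a - b) P + b D\<close>.\<close>

lemma sum_square_le_of_gram_inequality:
  fixes x :: "nat \<Rightarrow> real" and a b D P :: real
  assumes D: "2 \<le> D" and aD: "1 < a * D ^ 3" and b: "b = (1 - D * a) / (D * (D\<^sup>2 - 1))"
    and N: "real N = D\<^sup>2" and sum_x: "(\<Sum>\<alpha><N. x \<alpha>) = 1" and P: "P \<le> 1"
    and gram: "\<And>\<gamma>. 0 \<le> P - 2 * (\<Sum>\<alpha><N. \<gamma> \<alpha> * x \<alpha>) + b * (\<Sum>\<alpha><N. \<gamma> \<alpha>)\<^sup>2 + (a - b) * (\<Sum>\<alpha><N. (\<gamma> \<alpha>)\<^sup>2)"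
  shows "(\<Sum>\<alpha><N. (x \<alpha>)\<^sup>2) \<le> (a * D\<^sup>2 + 1) / (D * (D + 1))"
proof -
  note id = GSICPOVM_overlap_identities[OF D aD b]
  define c where "c = a - b"
  have c: "0 < c" using id(1) unfolding c_def .
  define e where "e \<alpha> = x \<alpha> - b * D" for \<alpha>
  define E2 where "E2 = (\<Sum>\<alpha><N. (e \<alpha>)\<^sup>2)"
  have sum_e: "(\<Sum>\<alpha><N. e \<alpha>) = D * c"
    using sum_x N id(2) unfolding e_def c_def by (simp add: sum_subtractf power2_eq_square power3_eq_cube mult_ac)
  have "0 \<le> P - 2 * (\<Sum>\<alpha><N. e \<alpha> / c * x \<alpha>) + b * (\<Sum>\<alpha><N. e \<alpha> / c)\<^sup>2 + c * (\<Sum>\<alpha><N. (e \<alpha> / c)\<^sup>2)"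
    using gram[of "\<lambda>\<alpha>. e \<alpha> / c"] unfolding c_def .
  also have "(\<Sum>\<alpha><N. e \<alpha> / c * x \<alpha>) = E2 / c + b * D\<^sup>2"
  proof -
    have "e \<alpha> / c * x \<alpha> = (e \<alpha>)\<^sup>2 / c + b * D / c * e \<alpha>" for \<alpha>
      unfolding e_def by (simp add: power2_eq_square divide_simps) (simp add: algebra_simps)
    hence "(\<Sum>\<alpha><N. e \<alpha> / c * x \<alpha>) = (\<Sum>\<alpha><N. (e \<alpha>)\<^sup>2 / c + b * D / c * e \<alpha>)" by simp
    thus ?thesis using c unfolding E2_def
      by (simp add: sum.distrib sum_divide_distrib[symmetric] sum_distrib_left[symmetric] sum_e power2_eq_square)
  qed
  also have "(\<Sum>\<alpha><N. e \<alpha> / c) = D" using c by (simp add: sum_divide_distrib[symmetric] sum_e)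
  also have "c * (\<Sum>\<alpha><N. (e \<alpha> / c)\<^sup>2) = E2 / c"
    using c unfolding E2_def by (simp add: power_divide sum_divide_distrib[symmetric] power2_eq_square)
  finally have "E2 \<le> c * (P - b * D\<^sup>2)" using c by (simp add: field_simps power2_eq_square)
  have "(\<Sum>\<alpha><N. (x \<alpha>)\<^sup>2) = E2 + 2 * b * D * (D * c) + D\<^sup>2 * (b * D)\<^sup>2"
  proof -
    have "(\<Sum>\<alpha><N. (x \<alpha>)\<^sup>2) = (\<Sum>\<alpha><N. (e \<alpha>)\<^sup>2 + 2 * b * D * e \<alpha> + (b * D)\<^sup>2)"
      by (rule sum.cong) (auto simp: e_def algebra_simps power2_eq_square)
    thus ?thesis unfolding E2_def using N by (simp add: sum.distrib sum_distrib_left[symmetric] sum_e)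
  qed
  also have "\<dots> \<le> c * (P - b * D\<^sup>2) + 2 * b * D * (D * c) + D\<^sup>2 * (b * D)\<^sup>2"
    using \<open>E2 \<le> c * (P - b * D\<^sup>2)\<close> by simp
  also have "\<dots> = c * P + b * D\<^sup>2 * (c + b * D\<^sup>2)" by (simp add: algebra_simps power2_eq_square)
  also have "\<dots> = c * P + b * D" using id(3) D unfolding c_def by (simp add: power2_eq_square)
  also have "\<dots> \<le> c + b * D" using P c by simp
  also have "\<dots> = (a * D\<^sup>2 + 1) / (D * (D + 1))" using id(4) unfolding c_def .
  finally show ?thesis .
qed

lemma sum_cmod_square_sub_lincomb:
  fixes f :: "'a \<Rightarrow> complex" and g :: "nat \<Rightarrow> 'a \<Rightarrow> complex" and \<gamma> :: "nat \<Rightarrow> real"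
  shows "(\<Sum>t\<in>T. (cmod (f t - (\<Sum>\<alpha>\<in>A. of_real (\<gamma> \<alpha>) * g \<alpha> t)))\<^sup>2)
    = (\<Sum>t\<in>T. (cmod (f t))\<^sup>2) - 2 * (\<Sum>\<alpha>\<in>A. \<gamma> \<alpha> * Re (\<Sum>t\<in>T. cnj (g \<alpha> t) * f t))
      + (\<Sum>\<alpha>\<in>A. \<Sum>\<beta>\<in>A. \<gamma> \<alpha> * \<gamma> \<beta> * Re (\<Sum>t\<in>T. cnj (g \<alpha> t) * g \<beta> t))"
proof -
  define h where "h t = (\<Sum>\<alpha>\<in>A. of_real (\<gamma> \<alpha>) * g \<alpha> t)" for t
  have cnj_h: "cnj (h t) = (\<Sum>\<alpha>\<in>A. of_real (\<gamma> \<alpha>) * cnj (g \<alpha> t))" for t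
    unfolding h_def by simp
  have cross: "(\<Sum>t\<in>T. Re (cnj (h t) * f t)) = (\<Sum>\<alpha>\<in>A. \<gamma> \<alpha> * Re (\<Sum>t\<in>T. cnj (g \<alpha> t) * f t))"
  proof -
    have "(\<Sum>t\<in>T. Re (cnj (h t) * f t)) = (\<Sum>t\<in>T. \<Sum>\<alpha>\<in>A. \<gamma> \<alpha> * Re (cnj (g \<alpha> t) * f t))"
      unfolding cnj_h sum_distrib_right Re_sum by (simp add: mult.assoc)
    also have "\<dots> = (\<Sum>\<alpha>\<in>A. \<Sum>t\<in>T. \<gamma> \<alpha> * Re (cnj (g \<alpha> t) * f t))" by (rule sum.swap)
    also have "\<dots> = (\<Sum>\<alpha>\<in>A. \<gamma> \<alpha> * Re (\<Sum>t\<in>T. cnj (g \<alpha> t) * f t))"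
      unfolding Re_sum sum_distrib_left ..
    finally show ?thesis .
  qed
  have square: "(\<Sum>t\<in>T. (cmod (h t))\<^sup>2)
      = (\<Sum>\<alpha>\<in>A. \<Sum>\<beta>\<in>A. \<gamma> \<alpha> * \<gamma> \<beta> * Re (\<Sum>t\<in>T. cnj (g \<alpha> t) * g \<beta> t))"
  proof -
    have "(cmod (h t))\<^sup>2 = (\<Sum>\<alpha>\<in>A. \<Sum>\<beta>\<in>A. \<gamma> \<alpha> * \<gamma> \<beta> * Re (cnj (g \<alpha> t) * g \<beta> t))" for t
    proof -
      have "cnj (h t) * h t = (\<Sum>\<alpha>\<in>A. \<Sum>\<beta>\<in>A. of_real (\<gamma> \<alpha> * \<gamma> \<beta>) * (cnj (g \<alpha> t) * g \<beta> t))"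
        unfolding cnj_h unfolding h_def sum_product by (simp add: mult_ac)
      thus ?thesis unfolding cmod_square_eq_Re by simp
    qed
    hence "(\<Sum>t\<in>T. (cmod (h t))\<^sup>2) = (\<Sum>\<alpha>\<in>A. \<Sum>\<beta>\<in>A. \<Sum>t\<in>T. \<gamma> \<alpha> * \<gamma> \<beta> * Re (cnj (g \<alpha> t) * g \<beta> t))"
      by (simp add: sum_swap3[of _ T])
    thus ?thesis unfolding Re_sum sum_distrib_left .
  qed
  have "(\<Sum>t\<in>T. (cmod (f t - h t))\<^sup>2)
      = (\<Sum>t\<in>T. (cmod (f t))\<^sup>2) - 2 * (\<Sum>t\<in>T. Re (cnj (h t) * f t)) + (\<Sum>t\<in>T. (cmod (h t))\<^sup>2)"
    unfolding cmod_diff_square by (simp add: sum.distrib sum_subtractf sum_distrib_left)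
  thus ?thesis unfolding cross square unfolding h_def .
qed

lemma density_purity_le_one:
  assumes D: "is_density n \<rho>"
  shows "(\<Sum>t\<in>{..<n} \<times> {..<n}. (cmod (\<rho> $$ t))\<^sup>2) \<le> 1"
proof -
  have P: "is_psd n \<rho>" and tr: "mtrace \<rho> = 1" using D unfolding is_density_def by auto
  have Rc: "\<rho> \<in> carrier_mat n n" and RH: "mat_adjoint \<rho> = \<rho>" using P unfolding is_psd_def by auto
  obtain U d where U: "unitary n U" and d: "\<And>k. k < n \<Longrightarrow> 0 \<le> d k"
    and R_eq: "\<rho> = U * real_diag_mat n d * mat_adjoint U"
    using psd_unitary_diagonalization[OF P] by blast
  have sum_d: "(\<Sum>k<n. d k) = 1"
    using tr unfolding R_eq mtrace_unitary_conj_real_diag[OF U] by (metis of_real_eq_1_iff of_real_sum)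
  have "complex_of_real (\<Sum>t\<in>{..<n} \<times> {..<n}. (cmod (\<rho> $$ t))\<^sup>2) = (\<Sum>t\<in>{..<n} \<times> {..<n}. cnj (\<rho> $$ t) * \<rho> $$ t)"
    unfolding of_real_sum complex_norm_square by (simp add: mult.commute)
  also have "\<dots> = mtrace (\<rho> * \<rho>)" by (rule hilbert_schmidt_eq_mtrace[OF Rc RH Rc])
  also have "\<dots> = complex_of_real (\<Sum>k<n. d k * d k)"
    unfolding R_eq unitary_conj_real_diag_square[OF U] mtrace_unitary_conj_real_diag[OF U] by simp
  finally have "(\<Sum>t\<in>{..<n} \<times> {..<n}. (cmod (\<rho> $$ t))\<^sup>2) = (\<Sum>k<n. d k * d k)"
    by (simp only: of_real_eq_iff)
  also have "\<dots> \<le> (\<Sum>k<n. d k * 1)"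
  proof (rule sum_mono, rule mult_left_mono)
    fix k assume k: "k \<in> {..<n}"
    show "d k \<le> 1" unfolding sum_d[symmetric] by (rule member_le_sum) (use k d in auto)
    show "0 \<le> d k" using k d by auto
  qed
  finally show ?thesis using sum_d by simp
qed

lemma mtrace_mult_hermitian_real:
  fixes A B :: "complex mat"
  assumes A: "A \<in> carrier_mat n n" "mat_adjoint A = A" and B: "B \<in> carrier_mat n n" "mat_adjoint B = B"
  shows "mtrace (A * B) = of_real (Re (mtrace (A * B)))"
proof -
  have "cnj (mtrace (A * B)) = (\<Sum>t\<in>{..<n} \<times> {..<n}. cnj (B $$ t) * A $$ t)"
    unfolding hilbert_schmidt_eq_mtrace[OF A B(1), symmetric] by (simp add: mult.commute)
  also have "\<dots> = mtrace (A * B)"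
    unfolding hilbert_schmidt_eq_mtrace[OF B A(1)] by (rule mtrace_mult_comm[OF B(1) A(1)])
  finally have "mtrace (A * B) \<in> \<real>" by (simp add: Reals_cnj_iff)
  thus ?thesis by simp
qed

lemma GSICPOVM_sum_mtrace_mult:
  assumes G: "is_GSICPOVM d a M" and R: "\<rho> \<in> carrier_mat d d"
  shows "(\<Sum>\<alpha><d\<^sup>2. mtrace (M \<alpha> * \<rho>)) = mtrace \<rho>"
proof -
  have Mc: "\<And>\<alpha>. \<alpha> < d\<^sup>2 \<Longrightarrow> M \<alpha> \<in> carrier_mat d d"
    and sum_M: "\<And>i j. i < d \<Longrightarrow> j < d \<Longrightarrow> (\<Sum>\<alpha><d\<^sup>2. M \<alpha> $$ (i, j)) = 1\<^sub>m d $$ (i, j)"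
    using G unfolding is_GSICPOVM_def is_psd_def by auto
  have "(\<Sum>\<alpha><d\<^sup>2. mtrace (M \<alpha> * \<rho>)) = (\<Sum>\<alpha><d\<^sup>2. \<Sum>i<d. \<Sum>j<d. M \<alpha> $$ (i, j) * \<rho> $$ (j, i))"
    by (rule sum.cong[OF refl], rule mtrace_mult_sum[OF Mc R]) auto
  also have "\<dots> = (\<Sum>i<d. \<Sum>\<alpha><d\<^sup>2. \<Sum>j<d. M \<alpha> $$ (i, j) * \<rho> $$ (j, i))"
    by (rule sum.swap)
  also have "\<dots> = (\<Sum>i<d. \<Sum>j<d. \<Sum>\<alpha><d\<^sup>2. M \<alpha> $$ (i, j) * \<rho> $$ (j, i))"
    by (rule sum.cong[OF refl], rule sum.swap)
  also have "\<dots> = (\<Sum>i<d. \<Sum>j<d. 1\<^sub>m d $$ (i, j) * \<rho> $$ (j, i))"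
    by (intro sum.cong refl) (simp add: sum_distrib_right[symmetric] sum_M)
  also have "\<dots> = (\<Sum>i<d. \<Sum>j<d. if j = i then \<rho> $$ (i, i) else 0)"
    by (intro sum.cong refl) auto
  also have "\<dots> = (\<Sum>i<d. \<rho> $$ (i, i))" by simp
  finally show ?thesis using mtrace_carrier[OF R] by simp
qed

lemma GSICPOVM_gram_inequality:
  fixes \<gamma> :: "nat \<Rightarrow> real"
  assumes G: "is_GSICPOVM d a M" and R: "\<rho> \<in> carrier_mat d d" "mat_adjoint \<rho> = \<rho>"
  defines "b \<equiv> (1 - real d * a) / (real d * (real d ^ 2 - 1))"
  shows "0 \<le> (\<Sum>t\<in>{..<d} \<times> {..<d}. (cmod (\<rho> $$ t))\<^sup>2)
    - 2 * (\<Sum>\<alpha><d\<^sup>2. \<gamma> \<alpha> * Re (mtrace (M \<alpha> * \<rho>)))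
    + b * (\<Sum>\<alpha><d\<^sup>2. \<gamma> \<alpha>)\<^sup>2 + (a - b) * (\<Sum>\<alpha><d\<^sup>2. (\<gamma> \<alpha>)\<^sup>2)"
proof -
  let ?T = "{..<d} \<times> {..<d}"
  have Mc: "\<And>\<alpha>. \<alpha> < d\<^sup>2 \<Longrightarrow> M \<alpha> \<in> carrier_mat d d"
    and MH: "\<And>\<alpha>. \<alpha> < d\<^sup>2 \<Longrightarrow> mat_adjoint (M \<alpha>) = M \<alpha>"
    and M_sq: "\<And>\<alpha>. \<alpha> < d\<^sup>2 \<Longrightarrow> mtrace (M \<alpha> * M \<alpha>) = of_real a"
    and M_off: "\<And>\<alpha> \<beta>. \<alpha> < d\<^sup>2 \<Longrightarrow> \<beta> < d\<^sup>2 \<Longrightarrow> \<alpha> \<noteq> \<beta> \<Longrightarrow> mtrace (M \<alpha> * M \<beta>) = of_real b"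
    using G unfolding is_GSICPOVM_def is_psd_def b_def by auto
  have "0 \<le> (\<Sum>t\<in>?T. (cmod (\<rho> $$ t - (\<Sum>\<alpha><d\<^sup>2. of_real (\<gamma> \<alpha>) * M \<alpha> $$ t)))\<^sup>2)"
    by (simp add: sum_nonneg)
  also have "\<dots> = (\<Sum>t\<in>?T. (cmod (\<rho> $$ t))\<^sup>2) - 2 * (\<Sum>\<alpha><d\<^sup>2. \<gamma> \<alpha> * Re (\<Sum>t\<in>?T. cnj (M \<alpha> $$ t) * \<rho> $$ t))
      + (\<Sum>\<alpha><d\<^sup>2. \<Sum>\<beta><d\<^sup>2. \<gamma> \<alpha> * \<gamma> \<beta> * Re (\<Sum>t\<in>?T. cnj (M \<alpha> $$ t) * M \<beta> $$ t))"
    by (rule sum_cmod_square_sub_lincomb)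
  also have "(\<Sum>\<alpha><d\<^sup>2. \<gamma> \<alpha> * Re (\<Sum>t\<in>?T. cnj (M \<alpha> $$ t) * \<rho> $$ t))
      = (\<Sum>\<alpha><d\<^sup>2. \<gamma> \<alpha> * Re (mtrace (M \<alpha> * \<rho>)))"
    by (intro sum.cong refl) (simp add: hilbert_schmidt_eq_mtrace[OF Mc MH R(1)])
  also have "(\<Sum>\<alpha><d\<^sup>2. \<Sum>\<beta><d\<^sup>2. \<gamma> \<alpha> * \<gamma> \<beta> * Re (\<Sum>t\<in>?T. cnj (M \<alpha> $$ t) * M \<beta> $$ t))
      = (\<Sum>\<alpha><d\<^sup>2. \<Sum>\<beta><d\<^sup>2. \<gamma> \<alpha> * \<gamma> \<beta> * (if \<alpha> = \<beta> then a else b))"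
    by (intro sum.cong refl) (simp add: hilbert_schmidt_eq_mtrace[OF Mc MH Mc] M_sq M_off)
  finally show ?thesis unfolding quadratic_form_uniform_gram by linarith
qed

theorem GSICPOVM_sum_square_prob_le:
  assumes G: "is_GSICPOVM d a M" and D: "is_density d \<rho>"
  shows "(\<Sum>\<alpha><d\<^sup>2. (cmod (mtrace (M \<alpha> * \<rho>)))\<^sup>2) \<le> (a * real d ^ 2 + 1) / (real d * (real d + 1))"
proof -
  have R: "\<rho> \<in> carrier_mat d d" "mat_adjoint \<rho> = \<rho>" and tr: "mtrace \<rho> = 1"
    using D unfolding is_density_def is_psd_def by auto
  have Mc: "\<And>\<alpha>. \<alpha> < d\<^sup>2 \<Longrightarrow> M \<alpha> \<in> carrier_mat d d"
    and MH: "\<And>\<alpha>. \<alpha> < d\<^sup>2 \<Longrightarrow> mat_adjoint (M \<alpha>) = M \<alpha>" and a: "1 / real d ^ 3 < a"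
    using G unfolding is_GSICPOVM_def is_psd_def by auto
  define x where "x \<alpha> = Re (mtrace (M \<alpha> * \<rho>))" for \<alpha>
  have x: "mtrace (M \<alpha> * \<rho>) = of_real (x \<alpha>)" if "\<alpha> < d\<^sup>2" for \<alpha>
    unfolding x_def by (rule mtrace_mult_hermitian_real[OF Mc MH R, OF that that])
  have "complex_of_real (\<Sum>\<alpha><d\<^sup>2. x \<alpha>) = 1"
    using GSICPOVM_sum_mtrace_mult[OF G R(1)] tr by (simp add: x)
  hence sum_x: "(\<Sum>\<alpha><d\<^sup>2. x \<alpha>) = 1" by (simp only: of_real_eq_1_iff)
  have d2: "2 \<le> real d" using GSICPOVM_dim_ge_2[OF G] by simp
  have "1 < a * real d ^ 3" using a d2 by (simp add: field_simps)
  hence "(\<Sum>\<alpha><d\<^sup>2. (x \<alpha>)\<^sup>2) \<le> (a * real d ^ 2 + 1) / (real d * (real d + 1))"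
    using sum_square_le_of_gram_inequality[OF d2 _ refl _ sum_x density_purity_le_one[OF D]]
      GSICPOVM_gram_inequality[OF G R] unfolding x_def by simp
  thus ?thesis by (simp add: x)
qed

section \<open>Separable states\<close>

lemma sum_lessThan_add_split:
  fixes l n :: nat
  shows "(\<Sum>r<l + n. f r) = (\<Sum>r<l. f r) + (\<Sum>k<n. f (l + k))"
  by (induction n) (auto simp: add.assoc)

lemma sum_lessThan_mult_split:
  fixes a b :: nat
  shows "(\<Sum>r<a * b. f r) = (\<Sum>i<a. \<Sum>k<b. f (i * b + k))"
proof (induction a)
  case (Suc a)
  have "(\<Sum>r<Suc a * b. f r) = (\<Sum>r<a * b + b. f r)" by (simp add: add.commute)
  also have "\<dots> = (\<Sum>r<a * b. f r) + (\<Sum>k<b. f (a * b + k))" by (rule sum_lessThan_add_split)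
  finally show ?case using Suc by simp
qed simp

lemma mult_add_less_mult:
  fixes i k a b :: nat
  assumes "i < a" "k < b"
  shows "i * b + k < a * b"
proof -
  have "i * b + k < Suc i * b" using assms by simp
  also have "\<dots> \<le> a * b" using assms by (intro mult_right_mono) auto
  finally show ?thesis .
qed

lemma kron_carrier:
  "A \<in> carrier_mat na na' \<Longrightarrow> B \<in> carrier_mat nb nb' \<Longrightarrow> kron A B \<in> carrier_mat (na * nb) (na' * nb')"
  unfolding kron_def by simp

lemma index_kron:
  "A \<in> carrier_mat na na' \<Longrightarrow> B \<in> carrier_mat nb nb' \<Longrightarrow> r < na * nb \<Longrightarrow> c < na' * nb' \<Longrightarrow>
    kron A B $$ (r, c) = A $$ (r div nb, c div nb') * B $$ (r mod nb, c mod nb')"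
  unfolding kron_def by simp

lemma mtrace_kron_mult:
  assumes A: "A \<in> carrier_mat na na" and B: "B \<in> carrier_mat nb nb"
    and C: "C \<in> carrier_mat na na" and D: "D \<in> carrier_mat nb nb"
  shows "mtrace (kron A B * kron C D) = mtrace (A * C) * mtrace (B * D)"
proof -
  have "mtrace (kron A B * kron C D) = (\<Sum>r<na * nb. \<Sum>s<na * nb. kron A B $$ (r, s) * kron C D $$ (s, r))"
    by (rule mtrace_mult_sum[OF kron_carrier[OF A B] kron_carrier[OF C D]])
  also have "\<dots> = (\<Sum>i<na. \<Sum>k<nb. \<Sum>j<na. \<Sum>k'<nb. (A $$ (i, j) * B $$ (k, k')) * (C $$ (j, i) * D $$ (k', k)))"
    unfolding sum_lessThan_mult_split
    by (intro sum.cong refl) (simp add: index_kron[OF A B] index_kron[OF C D] mult_add_less_mult)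
  also have "\<dots> = (\<Sum>i<na. \<Sum>j<na. \<Sum>k<nb. \<Sum>k'<nb. (A $$ (i, j) * C $$ (j, i)) * (B $$ (k, k') * D $$ (k', k)))"
    by (rule sum.cong[OF refl], subst sum.swap) (simp add: mult_ac)
  also have "\<dots> = (\<Sum>i<na. \<Sum>j<na. A $$ (i, j) * C $$ (j, i)) * (\<Sum>k<nb. \<Sum>k'<nb. B $$ (k, k') * D $$ (k', k))"
    unfolding sum_distrib_right unfolding sum_distrib_left ..
  also have "\<dots> = mtrace (A * C) * mtrace (B * D)"
    unfolding mtrace_mult_sum[OF A C] mtrace_mult_sum[OF B D] ..
  finally show ?thesis .
qed

lemma mtrace_mult_lincomb:
  assumes X: "X \<in> carrier_mat n n" and Y: "\<And>l. l < N \<Longrightarrow> Y l \<in> carrier_mat n n"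
  shows "mtrace (X * mat n n (\<lambda>(i, j). \<Sum>l<N. of_real (p l) * Y l $$ (i, j)))
    = (\<Sum>l<N. of_real (p l) * mtrace (X * Y l))"
proof -
  have "mtrace (X * mat n n (\<lambda>(i, j). \<Sum>l<N. of_real (p l) * Y l $$ (i, j)))
      = (\<Sum>i<n. \<Sum>j<n. \<Sum>l<N. of_real (p l) * (X $$ (i, j) * Y l $$ (j, i)))"
    by (subst mtrace_mult_sum[OF X]) (auto simp: sum_distrib_left mult_ac)
  also have "\<dots> = (\<Sum>l<N. \<Sum>i<n. \<Sum>j<n. of_real (p l) * (X $$ (i, j) * Y l $$ (j, i)))"
    by (rule sum_swap3)
  also have "\<dots> = (\<Sum>l<N. of_real (p l) * mtrace (X * Y l))"
    by (rule sum.cong[OF refl], subst mtrace_mult_sum[OF X Y]) (auto simp: sum_distrib_left)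
  finally show ?thesis .
qed

lemma ptrace_B_separable:
  assumes \<rho>: "\<rho> = mat (dA * dB) (dA * dB) (\<lambda>(r, c). \<Sum>l<N. of_real (p l) * kron (\<rho>A l) (\<rho>B l) $$ (r, c))"
    and A: "\<And>l. l < N \<Longrightarrow> \<rho>A l \<in> carrier_mat dA dA" and B: "\<And>l. l < N \<Longrightarrow> \<rho>B l \<in> carrier_mat dB dB"
    and trB: "\<And>l. l < N \<Longrightarrow> mtrace (\<rho>B l) = 1"
  shows "ptrace_B dA dB \<rho> = mat dA dA (\<lambda>(i, j). \<Sum>l<N. of_real (p l) * \<rho>A l $$ (i, j))"
proof (rule eq_matI)
  fix i j assume "i < dim_row (mat dA dA (\<lambda>(i, j). \<Sum>l<N. of_real (p l) * \<rho>A l $$ (i, j)))"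
    "j < dim_col (mat dA dA (\<lambda>(i, j). \<Sum>l<N. of_real (p l) * \<rho>A l $$ (i, j)))"
  hence i: "i < dA" and j: "j < dA" by auto
  have "ptrace_B dA dB \<rho> $$ (i, j) = (\<Sum>k<dB. \<Sum>l<N. of_real (p l) * (\<rho>A l $$ (i, j) * \<rho>B l $$ (k, k)))"
    unfolding ptrace_B_def \<rho> using i j
    by (auto intro!: sum.cong simp: index_kron[OF A B] mult_add_less_mult)
  also have "\<dots> = (\<Sum>l<N. of_real (p l) * \<rho>A l $$ (i, j) * mtrace (\<rho>B l))"
    by (subst sum.swap) (simp add: mtrace_carrier[OF B] sum_distrib_left mult.assoc)
  also have "\<dots> = (\<Sum>l<N. of_real (p l) * \<rho>A l $$ (i, j))" by (rule sum.cong) (auto simp: trB)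
  finally show "ptrace_B dA dB \<rho> $$ (i, j) = mat dA dA (\<lambda>(i, j). \<Sum>l<N. of_real (p l) * \<rho>A l $$ (i, j)) $$ (i, j)"
    using i j by simp
qed (auto simp: ptrace_B_def)

lemma ptrace_A_separable:
  assumes \<rho>: "\<rho> = mat (dA * dB) (dA * dB) (\<lambda>(r, c). \<Sum>l<N. of_real (p l) * kron (\<rho>A l) (\<rho>B l) $$ (r, c))"
    and A: "\<And>l. l < N \<Longrightarrow> \<rho>A l \<in> carrier_mat dA dA" and B: "\<And>l. l < N \<Longrightarrow> \<rho>B l \<in> carrier_mat dB dB"
    and trA: "\<And>l. l < N \<Longrightarrow> mtrace (\<rho>A l) = 1"
  shows "ptrace_A dA dB \<rho> = mat dB dB (\<lambda>(i, j). \<Sum>l<N. of_real (p l) * \<rho>B l $$ (i, j))"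
proof (rule eq_matI)
  fix i j assume "i < dim_row (mat dB dB (\<lambda>(i, j). \<Sum>l<N. of_real (p l) * \<rho>B l $$ (i, j)))"
    "j < dim_col (mat dB dB (\<lambda>(i, j). \<Sum>l<N. of_real (p l) * \<rho>B l $$ (i, j)))"
  hence i: "i < dB" and j: "j < dB" by auto
  have "ptrace_A dA dB \<rho> $$ (i, j) = (\<Sum>k<dA. \<Sum>l<N. of_real (p l) * (\<rho>A l $$ (k, k) * \<rho>B l $$ (i, j)))"
    unfolding ptrace_A_def \<rho> using i j
    by (auto intro!: sum.cong simp: index_kron[OF A B] mult_add_less_mult)
  also have "\<dots> = (\<Sum>l<N. of_real (p l) * \<rho>B l $$ (i, j) * mtrace (\<rho>A l))"
    by (subst sum.swap) (simp add: mtrace_carrier[OF A] sum_distrib_left sum_distrib_right mult_ac)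
  also have "\<dots> = (\<Sum>l<N. of_real (p l) * \<rho>B l $$ (i, j))" by (rule sum.cong) (auto simp: trA)
  finally show "ptrace_A dA dB \<rho> $$ (i, j) = mat dB dB (\<lambda>(i, j). \<Sum>l<N. of_real (p l) * \<rho>B l $$ (i, j)) $$ (i, j)"
    using i j by simp
qed (auto simp: ptrace_A_def)

text \<open>For a product state \<open>\<sigma>\<^sub>A \<otimes> \<sigma>\<^sub>B\<close> the matrix \<open>Mmat\<close> is the outer product of the two
  padded probability vectors of \<open>\<sigma>\<^sub>A\<close> and \<open>\<sigma>\<^sub>B\<close>.\<close>

definition padded_probs :: "real \<Rightarrow> nat \<Rightarrow> (nat \<Rightarrow> complex mat) \<Rightarrow> complex mat \<Rightarrow> nat \<Rightarrow> complex" where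
  "padded_probs \<mu> l M \<sigma> r = (if r < l then complex_of_real \<mu> else mtrace (M (r - l) * \<sigma>))"

lemma L2_set_padded_probs_le:
  assumes G: "is_GSICPOVM d a M" and D: "is_density d \<sigma>"
  shows "L2_set (\<lambda>r. cmod (padded_probs \<mu> l M \<sigma> r)) {..<l + d\<^sup>2}
    \<le> sqrt (real l * \<mu>\<^sup>2 + (a * real d ^ 2 + 1) / (real d * (real d + 1)))"
  unfolding L2_set_def
proof (rule real_sqrt_le_mono)
  have "(\<Sum>r<l + d\<^sup>2. (cmod (padded_probs \<mu> l M \<sigma> r))\<^sup>2)
      = real l * \<mu>\<^sup>2 + (\<Sum>\<alpha><d\<^sup>2. (cmod (mtrace (M \<alpha> * \<sigma>)))\<^sup>2)"
    unfolding sum_lessThan_add_split by (simp add: padded_probs_def)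
  also have "\<dots> \<le> real l * \<mu>\<^sup>2 + (a * real d ^ 2 + 1) / (real d * (real d + 1))"
    using GSICPOVM_sum_square_prob_le[OF G D] by simp
  finally show "(\<Sum>r<l + d\<^sup>2. (cmod (padded_probs \<mu> l M \<sigma> r))\<^sup>2)
      \<le> real l * \<mu>\<^sup>2 + (a * real d ^ 2 + 1) / (real d * (real d + 1))" .
qed

lemma separable_probs:
  fixes p :: "nat \<Rightarrow> real"
  assumes MA: "\<And>\<alpha>. \<alpha> < dA\<^sup>2 \<Longrightarrow> MA \<alpha> \<in> carrier_mat dA dA"
    and MB: "\<And>\<beta>. \<beta> < dB\<^sup>2 \<Longrightarrow> MB \<beta> \<in> carrier_mat dB dB"
    and dens: "\<And>i. i < N \<Longrightarrow> is_density dA (\<rho>A i) \<and> is_density dB (\<rho>B i)"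
    and \<rho>: "\<rho> = mat (dA * dB) (dA * dB) (\<lambda>(r, c). \<Sum>i<N. of_real (p i) * kron (\<rho>A i) (\<rho>B i) $$ (r, c))"
  shows "\<alpha> < dA\<^sup>2 \<Longrightarrow> varsigma dA dB MA \<rho> $ \<alpha> = (\<Sum>i<N. of_real (p i) * mtrace (MA \<alpha> * \<rho>A i))"
    and "\<beta> < dB\<^sup>2 \<Longrightarrow> zeta dA dB MB \<rho> $ \<beta> = (\<Sum>i<N. of_real (p i) * mtrace (MB \<beta> * \<rho>B i))"
    and "\<alpha> < dA\<^sup>2 \<Longrightarrow> \<beta> < dB\<^sup>2 \<Longrightarrow> corrG dA dB MA MB \<rho> $$ (\<alpha>, \<beta>)
      = (\<Sum>i<N. of_real (p i) * (mtrace (MA \<alpha> * \<rho>A i) * mtrace (MB \<beta> * \<rho>B i)))"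
proof -
  have A: "\<And>i. i < N \<Longrightarrow> \<rho>A i \<in> carrier_mat dA dA" and trA: "\<And>i. i < N \<Longrightarrow> mtrace (\<rho>A i) = 1"
    and B: "\<And>i. i < N \<Longrightarrow> \<rho>B i \<in> carrier_mat dB dB" and trB: "\<And>i. i < N \<Longrightarrow> mtrace (\<rho>B i) = 1"
    using dens unfolding is_density_def is_psd_def by auto
  show "varsigma dA dB MA \<rho> $ \<alpha> = (\<Sum>i<N. of_real (p i) * mtrace (MA \<alpha> * \<rho>A i))" if "\<alpha> < dA\<^sup>2"
  proof -
    have "varsigma dA dB MA \<rho> $ \<alpha> = mtrace (MA \<alpha> * ptrace_B dA dB \<rho>)"
      unfolding varsigma_def using that by simp
    thus ?thesis using ptrace_B_separable[OF \<rho> A B trB] mtrace_mult_lincomb[OF MA[OF that] A] by simp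
  qed
  show "zeta dA dB MB \<rho> $ \<beta> = (\<Sum>i<N. of_real (p i) * mtrace (MB \<beta> * \<rho>B i))" if "\<beta> < dB\<^sup>2"
  proof -
    have "zeta dA dB MB \<rho> $ \<beta> = mtrace (MB \<beta> * ptrace_A dA dB \<rho>)"
      unfolding zeta_def using that by simp
    thus ?thesis using ptrace_A_separable[OF \<rho> A B trA] mtrace_mult_lincomb[OF MB[OF that] B] by simp
  qed
  show "corrG dA dB MA MB \<rho> $$ (\<alpha>, \<beta>)
      = (\<Sum>i<N. of_real (p i) * (mtrace (MA \<alpha> * \<rho>A i) * mtrace (MB \<beta> * \<rho>B i)))"
    if "\<alpha> < dA\<^sup>2" "\<beta> < dB\<^sup>2"
    using that unfolding corrG_def \<rho>
    by (simp add: mtrace_mult_lincomb[OF kron_carrier[OF MA MB] kron_carrier[OF A B]]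
      mtrace_kron_mult[OF MA MB A B])
qed

lemma Mmat_carrier: "Mmat l \<mu> \<nu> dA dB MA MB \<rho> \<in> carrier_mat (l + dA\<^sup>2) (l + dB\<^sup>2)"
  by (simp add: Mmat_def Jmat_def omega_def corrG_def varsigma_def zeta_def)

lemma index_Mmat:
  assumes "r < l + dA\<^sup>2" "c < l + dB\<^sup>2"
  shows "Mmat l \<mu> \<nu> dA dB MA MB \<rho> $$ (r, c) =
    (if r < l then if c < l then of_real (\<mu> * \<nu>) else of_real \<mu> * zeta dA dB MB \<rho> $ (c - l)
     else if c < l then of_real \<nu> * varsigma dA dB MA \<rho> $ (r - l)
     else corrG dA dB MA MB \<rho> $$ (r - l, c - l))"
  using assms by (simp add: Mmat_def Jmat_def omega_def corrG_def varsigma_def zeta_def)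

lemma Mmat_separable_index:
  fixes p :: "nat \<Rightarrow> real"
  assumes MA: "\<And>\<alpha>. \<alpha> < dA\<^sup>2 \<Longrightarrow> MA \<alpha> \<in> carrier_mat dA dA"
    and MB: "\<And>\<beta>. \<beta> < dB\<^sup>2 \<Longrightarrow> MB \<beta> \<in> carrier_mat dB dB"
    and p: "(\<Sum>i<N. p i) = 1"
    and dens: "\<And>i. i < N \<Longrightarrow> is_density dA (\<rho>A i) \<and> is_density dB (\<rho>B i)"
    and \<rho>: "\<rho> = mat (dA * dB) (dA * dB) (\<lambda>(r, c). \<Sum>i<N. of_real (p i) * kron (\<rho>A i) (\<rho>B i) $$ (r, c))"
    and r: "r < l + dA\<^sup>2" and c: "c < l + dB\<^sup>2"
  shows "Mmat l \<mu> \<nu> dA dB MA MB \<rho> $$ (r, c)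
    = (\<Sum>i<N. of_real (p i) * (padded_probs \<mu> l MA (\<rho>A i) r * padded_probs \<nu> l MB (\<rho>B i) c))"
proof -
  have pc: "(\<Sum>i<N. complex_of_real (p i)) = 1" using p by (metis of_real_1 of_real_sum)
  consider "r < l" "c < l" | "r < l" "\<not> c < l" | "\<not> r < l" "c < l" | "\<not> r < l" "\<not> c < l" by blast
  thus ?thesis
  proof cases
    case 1
    thus ?thesis unfolding index_Mmat[OF r c] padded_probs_def using pc
      by (simp flip: sum_distrib_right)
  next
    case 2
    thus ?thesis unfolding index_Mmat[OF r c] padded_probs_def using c separable_probs(2)[where \<beta> = "c - l", OF MA MB dens \<rho>]
      by (simp add: sum_distrib_left mult_ac)
  next
    case 3
    thus ?thesis unfolding index_Mmat[OF r c] padded_probs_def using r separable_probs(1)[where \<alpha> = "r - l", OF MA MB dens \<rho>]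
      by (simp add: sum_distrib_left mult_ac)
  next
    case 4
    thus ?thesis unfolding index_Mmat[OF r c] padded_probs_def using r c separable_probs(3)[where \<alpha> = "r - l" and \<beta> = "c - l", OF MA MB dens \<rho>]
      by (simp add: mult_ac)
  qed
qed

theorem corollary1:
  fixes dA dB l :: nat and aA aB \<mu> \<nu> :: real
    and MA MB :: "nat \<Rightarrow> complex mat" and \<rho> :: "complex mat"
  assumes "is_GSICPOVM dA aA MA"
    and "is_GSICPOVM dB aB MB"
    and "0 < l"
    and "is_density (dA * dB) \<rho>"
    and "separable dA dB \<rho>"
  shows "trace_norm (Mmat l \<mu> \<nu> dA dB MA MB \<rho>)
     \<le> sqrt ((real l * \<mu>^2 + (aA * real dA ^ 2 + 1) / (real dA * (real dA + 1)))
            * (real l * \<nu>^2 + (aB * real dB ^ 2 + 1) / (real dB * (real dB + 1))))"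
proof -
  note GA = assms(1) and GB = assms(2)
  obtain N :: nat and p \<rho>A \<rho>B where p0: "\<forall>i<N. 0 \<le> p i" and p: "(\<Sum>i<N. p i) = 1"
    and dens: "\<forall>i<N. is_density dA (\<rho>A i) \<and> is_density dB (\<rho>B i)"
    and \<rho>: "\<rho> = mat (dA * dB) (dA * dB) (\<lambda>(r, c). \<Sum>i<N. of_real (p i) * kron (\<rho>A i) (\<rho>B i) $$ (r, c))"
    using assms(5) unfolding separable_def by blast
  define KA where "KA = real l * \<mu>\<^sup>2 + (aA * real dA ^ 2 + 1) / (real dA * (real dA + 1))"
  define KB where "KB = real l * \<nu>\<^sup>2 + (aB * real dB ^ 2 + 1) / (real dB * (real dB + 1))"
  have "\<And>r c. r < l + dA\<^sup>2 \<Longrightarrow> c < l + dB\<^sup>2 \<Longrightarrow> Mmat l \<mu> \<nu> dA dB MA MB \<rho> $$ (r, c)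
      = (\<Sum>i<N. of_real (p i) * (padded_probs \<mu> l MA (\<rho>A i) r * padded_probs \<nu> l MB (\<rho>B i) c))"
    using GA GB by (intro Mmat_separable_index[OF _ _ p _ \<rho>]) (use dens in \<open>auto simp: is_GSICPOVM_def is_psd_def\<close>)
  hence "trace_norm (Mmat l \<mu> \<nu> dA dB MA MB \<rho>)
      \<le> (\<Sum>i<N. p i * (L2_set (\<lambda>r. cmod (padded_probs \<mu> l MA (\<rho>A i) r)) {..<l + dA\<^sup>2}
                      * L2_set (\<lambda>c. cmod (padded_probs \<nu> l MB (\<rho>B i) c)) {..<l + dB\<^sup>2}))"
    by (rule trace_norm_le_rank_one_combination[OF Mmat_carrier]) (use p0 in auto)
  also have "\<dots> \<le> (\<Sum>i<N. p i * (sqrt KA * sqrt KB))"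
    unfolding KA_def KB_def using p0 dens
    by (intro sum_mono mult_left_mono mult_mono' L2_set_padded_probs_le[OF GA] L2_set_padded_probs_le[OF GB])
      (auto intro: L2_set_nonneg)
  also have "\<dots> = sqrt (KA * KB)" by (simp add: p real_sqrt_mult flip: sum_distrib_right)
  finally show ?thesis unfolding KA_def KB_def .
qed

end
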